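(* Let $d\ge 3$. No graph of the form $\lozenge_{d-1}\star G_4$ (with $G_4$ any graph on $4$ vertices) is $d$-ball packable, except $\lozenge_{d+1}=\lozenge_{d-1}\star C_4$.
   Context: $\lozenge_k$ denotes the $1$-skeleton of the $k$-dimensional orthoplex (the join of $k$ copies of the edgeless graph on $2$ vertices); $C_4$ is the $4$-cycle; $\star$ the graph join. A $d$-ball in $\hat{\mathbb R}^d$ is a closed ball, closed exterior of an open ball with $\infty$, or a closed half-space with $\infty$; a $d$-ball packing is a collection of $d$-balls with disjoint interiors; its tangency graph joins balls meeting in exactly one point; a graph is $d$-ball packable if isomorphic to the tangency graph of some $d$-ball packing. *)

theory Defs
  imports "HOL-Analysis.Analysis"
begin

text \<open>The extended space \<open>R^d \<union> {\<infinity>}\<close> is modelled as \<open>(real^'n) option\<close>,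
  with \<open>None\<close> the point at infinity and \<open>d = CARD('n)\<close>.
  Its topology is the one-point compactification topology.\<close>

definition ext_open :: "(real^'n) option set \<Rightarrow> bool" where
  "ext_open U \<longleftrightarrow> open {x. Some x \<in> U} \<and> (None \<in> U \<longrightarrow> compact {x. Some x \<notin> U})"

definition ext_interior :: "(real^'n) option set \<Rightarrow> (real^'n) option set" where
  "ext_interior S = \<Union>{U. ext_open U \<and> U \<subseteq> S}"

definition is_dball :: "(real^'n) option set \<Rightarrow> bool" where
  "is_dball S \<longleftrightarrow>
     (\<exists>c r. r > 0 \<and> S = Some ` cball c r) \<or>
     (\<exists>c r. r > 0 \<and> S = insert None (Some ` (- ball c r))) \<or>
     (\<exists>a b. a \<noteq> 0 \<and> S = insert None (Some ` {x. a \<bullet> x \<le> b}))"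

definition tangent :: "(real^'n) option set \<Rightarrow> (real^'n) option set \<Rightarrow> bool" where
  "tangent S T \<longleftrightarrow> (\<exists>!p. p \<in> S \<inter> T)"

definition ball_packable :: "'n::finite itself \<Rightarrow> 'v set \<Rightarrow> ('v \<Rightarrow> 'v \<Rightarrow> bool) \<Rightarrow> bool" where
  "ball_packable _ V E \<longleftrightarrow>
     (\<exists>B :: 'v \<Rightarrow> (real^'n) option set.
        inj_on B V \<and> (\<forall>v\<in>V. is_dball (B v)) \<and>
        (\<forall>u\<in>V. \<forall>v\<in>V. u \<noteq> v \<longrightarrow> ext_interior (B u) \<inter> ext_interior (B v) = {}) \<and>
        (\<forall>u\<in>V. \<forall>v\<in>V. u \<noteq> v \<longrightarrow> (E u v \<longleftrightarrow> tangent (B u) (B v))))"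

definition graph_iso :: "'a set \<Rightarrow> ('a \<Rightarrow> 'a \<Rightarrow> bool) \<Rightarrow> 'b set \<Rightarrow> ('b \<Rightarrow> 'b \<Rightarrow> bool) \<Rightarrow> bool" where
  "graph_iso V E W F \<longleftrightarrow>
     (\<exists>f. bij_betw f V W \<and> (\<forall>u\<in>V. \<forall>v\<in>V. E u v \<longleftrightarrow> F (f u) (f v)))"

definition join_V :: "'a set \<Rightarrow> 'b set \<Rightarrow> ('a + 'b) set" where
  "join_V V W = Inl ` V \<union> Inr ` W"

fun join_E :: "('a \<Rightarrow> 'a \<Rightarrow> bool) \<Rightarrow> ('b \<Rightarrow> 'b \<Rightarrow> bool) \<Rightarrow> ('a + 'b) \<Rightarrow> ('a + 'b) \<Rightarrow> bool" where
  "join_E E F (Inl a) (Inl b) = E a b"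
| "join_E E F (Inr a) (Inr b) = F a b"
| "join_E E F (Inl a) (Inr b) = True"
| "join_E E F (Inr a) (Inl b) = True"

text \<open>1-skeleton of the k-dimensional orthoplex: join of k copies of the edgeless graph on 2
  vertices; vertices \<open>(i, s)\<close> with \<open>i < k\<close>, adjacent iff \<open>i \<noteq> j\<close>.\<close>

definition orth_V :: "nat \<Rightarrow> (nat \<times> bool) set" where
  "orth_V k = {0..<k} \<times> UNIV"

definition orth_E :: "nat \<times> bool \<Rightarrow> nat \<times> bool \<Rightarrow> bool" where
  "orth_E p q \<longleftrightarrow> fst p \<noteq> fst q"

definition C4_V :: "nat set" where
  "C4_V = {0..<4}"

definition C4_E :: "nat \<Rightarrow> nat \<Rightarrow> bool" where
  "C4_E i j \<longleftrightarrow> (i + 1) mod 4 = j \<or> (j + 1) mod 4 = i"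

end

theory Submission
  imports Defs
begin

(*
  Inversive coordinates turn every d-ball into a unit vector of the Lorentz space R^(d+1,1);
  balls with disjoint interiors have product at most -1, with equality exactly for tangent
  balls (or a ball and its own exterior).

  For a packing of the orthoplex part, the differences of opposite vertices are d - 1 pairwise
  orthogonal spacelike vectors, and the midpoint of an opposite pair is timelike.  Together
  they span a subspace whose orthogonal complement is a Euclidean plane.  Subtracting a
  suitable multiple of the midpoint from the vectors of the four remaining balls puts them in
  that plane, as vectors of squared norm 2 with pairwise non-positive products; a dimension
  count forces the multiple to be 1.  Such four vectors are the vertices of a square, whose
  adjacency pattern is exactly the tangency pattern C4.

  Conversely, the orthoplex on d - 1 coordinates joined with C4 is the orthoplex on d + 1
  coordinates, which is packed by the balls of radius sqrt 2 / 2 at the vertices of the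
  cross-polytope together with a central ball and the exterior of a large ball.
*)

text \<open>\<open>\<real>\<^sup>d\<^sup>+\<^sup>1\<^sup>,\<^sup>1\<close> is modelled as \<open>((real^'n) \<times> real) \<times> real\<close>, the last
  coordinate being the timelike one.\<close>

definition lorentz :: "((real^'n) \<times> real) \<times> real \<Rightarrow> ((real^'n) \<times> real) \<times> real \<Rightarrow> real" where
  "lorentz u v = inner (fst u) (fst v) - snd u * snd v"

lemma lorentz_sym: "lorentz u v = lorentz v u"
  by (simp add: lorentz_def inner_commute mult.commute)

lemma lorentz_add_left: "lorentz (u + w) v = lorentz u v + lorentz w v"
  by (simp add: lorentz_def algebra_simps)

lemma lorentz_add_right: "lorentz v (u + w) = lorentz v u + lorentz v w"
  by (simp add: lorentz_def algebra_simps)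

lemma lorentz_diff_left: "lorentz (u - w) v = lorentz u v - lorentz w v"
  by (simp add: lorentz_def algebra_simps)

lemma lorentz_diff_right: "lorentz v (u - w) = lorentz v u - lorentz v w"
  by (simp add: lorentz_def algebra_simps)

lemma lorentz_scaleR_left: "lorentz (c *\<^sub>R u) v = c * lorentz u v"
  by (simp add: lorentz_def algebra_simps)

lemma lorentz_scaleR_right: "lorentz v (c *\<^sub>R u) = c * lorentz v u"
  by (simp add: lorentz_def algebra_simps)

lemma lorentz_minus_left: "lorentz (- u) v = - lorentz u v"
  by (simp add: lorentz_def)

lemma lorentz_minus_right: "lorentz v (- u) = - lorentz v u"
  by (simp add: lorentz_def)

lemma lorentz_zero_left [simp]: "lorentz 0 v = 0"
  by (simp add: lorentz_def)

lemma lorentz_zero_right [simp]: "lorentz v 0 = 0"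
  by (simp add: lorentz_def)

lemmas lorentz_simps = lorentz_add_left lorentz_add_right lorentz_diff_left lorentz_diff_right
  lorentz_scaleR_left lorentz_scaleR_right lorentz_minus_left lorentz_minus_right

lemma lorentz_sum_left: "lorentz (\<Sum>v\<in>S. f v) w = (\<Sum>v\<in>S. lorentz (f v) w)"
  by (induction S rule: infinite_finite_induct) (simp_all add: lorentz_add_left)

lemma timelike_orthogonal_nonneg:
  assumes "lorentz p p < 0" "lorentz p z = 0"
  shows "lorentz z z \<ge> 0"
proof -
  obtain P m where p: "p = (P, m)" by (cases p)
  obtain Z k where z: "z = (Z, k)" by (cases z)
  have pp: "inner P P < m * m" and pz: "inner P Z = m * k"
    using assms by (auto simp: lorentz_def p z)
  have "m * m * (k * k) \<le> inner P P * inner Z Z"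
    using Cauchy_Schwarz_ineq[of P Z] pz by (simp add: power2_eq_square algebra_simps)
  then have "k * k \<le> inner Z Z"
    using pp by (smt (verit) inner_ge_zero mult_le_cancel_left mult_right_mono zero_le_square)
  then show ?thesis by (simp add: lorentz_def z)
qed

lemma timelike_orthogonal_null_imp_zero:
  assumes "lorentz p p < 0" "lorentz p z = 0" "lorentz z z = 0"
  shows "z = 0"
proof -
  obtain P m where p: "p = (P, m)" by (cases p)
  obtain Z k where z: "z = (Z, k)" by (cases z)
  have pp: "inner P P < m * m" and pz: "inner P Z = m * k" and zz: "inner Z Z = k * k"
    using assms by (auto simp: lorentz_def p z)
  have "m * m * inner Z Z \<le> inner P P * inner Z Z"
    using Cauchy_Schwarz_ineq[of P Z] pz zz by (simp add: power2_eq_square algebra_simps)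
  then have "inner Z Z = 0"
    using pp by (smt (verit) inner_ge_zero mult_strict_right_mono)
  with zz show ?thesis by (simp add: z zero_prod_def)
qed

definition orthogonal_frame :: "(((real^'n) \<times> real) \<times> real) set \<Rightarrow> bool" where
  "orthogonal_frame F \<longleftrightarrow> finite F \<and> (\<forall>u\<in>F. lorentz u u \<noteq> 0) \<and>
     (\<forall>u\<in>F. \<forall>v\<in>F. u \<noteq> v \<longrightarrow> lorentz u v = 0)"

lemma orthogonal_frame_insert:
  assumes "orthogonal_frame F" "lorentz z z \<noteq> 0" "\<forall>u\<in>F. lorentz z u = 0"
  shows "orthogonal_frame (insert z F)" "z \<notin> F"
  using assms by (auto simp: orthogonal_frame_def lorentz_sym)

lemma orthogonal_frame_independent:
  assumes "orthogonal_frame (F :: (((real^'n::finite) \<times> real) \<times> real) set)"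
  shows "independent F"
proof
  assume "dependent F"
  have fin: "finite F" using assms by (simp add: orthogonal_frame_def)
  obtain u v where v: "v \<in> F" "u v \<noteq> 0" and sum0: "(\<Sum>v\<in>F. u v *\<^sub>R v) = 0"
    using \<open>dependent F\<close> unfolding dependent_finite[OF fin] by blast
  have "0 = lorentz (\<Sum>v\<in>F. u v *\<^sub>R v) v" using sum0 by simp
  also have "\<dots> = u v * lorentz v v + (\<Sum>x\<in>F - {v}. u x * lorentz x v)"
    using sum.remove[OF fin v(1)] by (simp add: lorentz_sum_left lorentz_scaleR_left)
  also have "(\<Sum>x\<in>F - {v}. u x * lorentz x v) = 0"
    using assms v(1) unfolding orthogonal_frame_def by (intro sum.neutral) auto
  finally show False using v assms by (auto simp: orthogonal_frame_def)
qed

lemma orthogonal_frame_card_le: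
  assumes "orthogonal_frame (F :: (((real^'n::finite) \<times> real) \<times> real) set)"
  shows "card F \<le> CARD('n) + 2"
  using independent_bound[OF orthogonal_frame_independent[OF assms]] by simp

text \<open>A frame of \<open>CARD('n) + 1\<close> vectors containing a timelike one leaves a one-dimensional
  spacelike orthogonal complement, on which Cauchy-Schwarz is an equality.\<close>

lemma frame_complement_cauchy_schwarz_eq:
  fixes F :: "(((real^'n::finite) \<times> real) \<times> real) set"
  assumes frame: "orthogonal_frame F" "card F \<ge> CARD('n) + 1"
    and p: "p \<in> F" "lorentz p p < 0"
    and z: "\<forall>u\<in>F. lorentz z u = 0" and z': "\<forall>u\<in>F. lorentz z' u = 0"
  shows "(lorentz z z')^2 = lorentz z z * lorentz z' z'"
proof (cases "z = 0")
  case False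
  have pz: "lorentz p z = 0" "lorentz p z' = 0" using p z z' by (auto simp: lorentz_sym)
  have zz: "lorentz z z > 0"
    using timelike_orthogonal_nonneg[OF p(2) pz(1)] timelike_orthogonal_null_imp_zero[OF p(2) pz(1)]
      False by force
  define w where "w = z' - (lorentz z z' / lorentz z z) *\<^sub>R z"
  have wz: "lorentz w z = 0" using zz by (simp add: w_def lorentz_simps lorentz_sym)
  have wF: "\<forall>u\<in>F. lorentz w u = 0" using z z' by (simp add: w_def lorentz_simps)
  have "lorentz w w = 0"
  proof (rule ccontr)
    assume ww: "lorentz w w \<noteq> 0"
    have "orthogonal_frame (insert w (insert z F))" "w \<notin> insert z F" "z \<notin> F"
      using orthogonal_frame_insert[OF frame(1) _ z] orthogonal_frame_insert[of "insert z F" w]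
        zz ww wz wF by (auto simp: lorentz_sym)
    then have "card (insert w (insert z F)) = card F + 2"
      using frame(1) by (simp add: orthogonal_frame_def)
    with orthogonal_frame_card_le[OF \<open>orthogonal_frame (insert w (insert z F))\<close>] frame(2)
    show False by simp
  qed
  moreover have "lorentz w w = lorentz z' z' - (lorentz z z')^2 / lorentz z z"
    using zz by (simp add: w_def lorentz_simps lorentz_sym power2_eq_square field_simps)
  ultimately show ?thesis using zz by (simp add: field_simps)
qed simp

lemma complement_no_opposite_triple:
  fixes F :: "(((real^'n::finite) \<times> real) \<times> real) set"
  assumes frame: "orthogonal_frame F" "card F \<ge> CARD('n) + 1" and p: "p \<in> F" "lorentz p p < 0"
    and z: "\<forall>u\<in>F. lorentz z1 u = 0" "\<forall>u\<in>F. lorentz z2 u = 0" "\<forall>u\<in>F. lorentz z3 u = 0"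
    and norm: "lorentz z1 z1 = N" "lorentz z2 z2 = N" "lorentz z3 z3 = N"
    and ne: "lorentz z1 z2 \<noteq> N" "lorentz z1 z3 \<noteq> N" "lorentz z2 z3 \<noteq> N"
  shows False
proof -
  note cs = frame_complement_cauchy_schwarz_eq[OF frame p]
  have "(lorentz z1 z2)^2 = N^2" "(lorentz z1 z3)^2 = N^2" "(lorentz z2 z3)^2 = N^2"
    using cs z norm by (simp_all add: power2_eq_square)
  then have opp: "lorentz z1 z2 = -N" "lorentz z1 z3 = -N" "lorentz z2 z3 = -N"
    using ne by (simp_all add: power2_eq_iff)
  have "lorentz p (z1 + z2 + z3) = 0" using p(1) z by (simp add: lorentz_simps lorentz_sym)
  then have "lorentz (z1 + z2 + z3) (z1 + z2 + z3) \<ge> 0"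
    by (rule timelike_orthogonal_nonneg[OF p(2)])
  moreover have "lorentz (z1 + z2 + z3) (z1 + z2 + z3) = -3 * N"
    using opp norm by (simp add: lorentz_simps lorentz_sym)
  moreover have "N \<ge> 0"
    using timelike_orthogonal_nonneg[OF p(2), of z1] p(1) z(1) norm(1) by (simp add: lorentz_sym)
  ultimately show False using opp ne(1) by simp
qed

lemma complement_triple_nonobtuse_pair:
  fixes F :: "(((real^'n::finite) \<times> real) \<times> real) set"
  assumes frame: "orthogonal_frame F" "card F \<ge> CARD('n) + 1" and p: "p \<in> F" "lorentz p p < 0"
    and z: "\<forall>u\<in>F. lorentz z1 u = 0" "\<forall>u\<in>F. lorentz z2 u = 0" "\<forall>u\<in>F. lorentz z3 u = 0"
  shows "lorentz z1 z2 \<ge> 0 \<or> lorentz z1 z3 \<ge> 0 \<or> lorentz z2 z3 \<ge> 0"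
proof (rule ccontr)
  assume neg: "\<not> ?thesis"
  have orth_p: "lorentz p y = 0" if "\<forall>u\<in>F. lorentz y u = 0" for y
    using that p(1) by (simp add: lorentz_sym)
  define n1 where "n1 = lorentz z1 z1"
  have "n1 \<ge> 0" unfolding n1_def by (rule timelike_orthogonal_nonneg[OF p(2) orth_p[OF z(1)]])
  moreover have "n1 \<noteq> 0"
    using timelike_orthogonal_null_imp_zero[OF p(2) orth_p[OF z(1)]] neg by (auto simp: n1_def)
  ultimately have n1: "n1 > 0" by simp
  have parallel: "n1 *\<^sub>R y = lorentz z1 y *\<^sub>R z1" if y: "\<forall>u\<in>F. lorentz y u = 0" for y
  proof -
    define d where "d = lorentz z1 y *\<^sub>R z1 - n1 *\<^sub>R y"
    have "lorentz p d = 0" using orth_p[OF z(1)] orth_p[OF y] by (simp add: d_def lorentz_simps)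
    moreover have "lorentz d d = n1 * (n1 * lorentz y y - (lorentz z1 y)^2)"
      by (simp add: d_def lorentz_simps lorentz_sym n1_def power2_eq_square algebra_simps)
    moreover have "(lorentz z1 y)^2 = n1 * lorentz y y"
      using frame_complement_cauchy_schwarz_eq[OF frame p z(1) y] by (simp add: n1_def)
    ultimately have "d = 0" using timelike_orthogonal_null_imp_zero[OF p(2)] by simp
    then show ?thesis by (simp add: d_def)
  qed
  have "n1 * n1 * lorentz z2 z3 = lorentz (n1 *\<^sub>R z2) (n1 *\<^sub>R z3)" by (simp add: lorentz_simps)
  also have "\<dots> = n1 * (lorentz z1 z2 * lorentz z1 z3)"
    using parallel[OF z(2)] parallel[OF z(3)] by (simp add: lorentz_simps n1_def)
  finally have "n1 * lorentz z2 z3 = lorentz z1 z2 * lorentz z1 z3" using n1 by simp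
  moreover have "lorentz z1 z2 * lorentz z1 z3 > 0" using neg by (simp add: mult_neg_neg)
  ultimately have "lorentz z2 z3 > 0" using n1 by (metis zero_less_mult_pos)
  with neg show False by simp
qed

lemma timelike_orthogonal_antipodal:
  assumes "lorentz p p < 0" "lorentz p a = 0" "lorentz p b = 0"
    and "lorentz a a = 2" "lorentz b b = 2" "lorentz a b = -2"
  shows "b = - a"
proof -
  have "lorentz p (a + b) = 0" "lorentz (a + b) (a + b) = 0"
    using assms by (simp_all add: lorentz_simps lorentz_sym)
  then have "a + b = 0" by (rule timelike_orthogonal_null_imp_zero[OF assms(1)])
  then show ?thesis by (simp add: eq_neg_iff_add_eq_0 add.commute)
qed

text \<open>In a codimension-two frame with a timelike vector the orthogonal complement is a Euclidean
  plane; in it, four vectors of squared norm 2 with pairwise non-positive products form a square.\<close>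

context
  fixes F :: "(((real^'n::finite) \<times> real) \<times> real) set" and p
  assumes frame: "orthogonal_frame F" "card F \<ge> CARD('n)" and p: "p \<in> F" "lorentz p p < 0"
begin

lemma extended_frame:
  assumes "\<forall>u\<in>F. lorentz y u = 0" "lorentz y y = 2"
  shows "orthogonal_frame (insert y F)" "card (insert y F) \<ge> CARD('n) + 1" "p \<in> insert y F"
  using orthogonal_frame_insert[OF frame(1) _ assms(1)] assms(2) frame p
  by (auto simp: orthogonal_frame_def)

lemma antipodal_pair_forces_square:
  assumes y: "\<forall>u\<in>F. lorentz y1 u = 0" "\<forall>u\<in>F. lorentz y2 u = 0"
      "\<forall>u\<in>F. lorentz y3 u = 0" "\<forall>u\<in>F. lorentz y4 u = 0"
    and norm: "lorentz y1 y1 = 2" "lorentz y2 y2 = 2" "lorentz y3 y3 = 2" "lorentz y4 y4 = 2"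
    and obtuse: "lorentz y1 y3 \<le> 0" "lorentz y1 y4 \<le> 0" "lorentz y2 y3 \<le> 0"
      "lorentz y2 y4 \<le> 0" "lorentz y3 y4 \<le> 0"
    and antipodal: "lorentz y1 y2 = -2"
  shows "lorentz y3 y4 = -2 \<and> lorentz y1 y3 = 0 \<and> lorentz y1 y4 = 0 \<and>
    lorentz y2 y3 = 0 \<and> lorentz y2 y4 = 0"
proof -
  have "y2 = - y1"
    using timelike_orthogonal_antipodal[OF p(2) _ _ norm(1,2) antipodal] p(1) y(1,2)
    by (simp add: lorentz_sym)
  then have perp: "lorentz y1 y3 = 0" "lorentz y1 y4 = 0" "lorentz y2 y3 = 0" "lorentz y2 y4 = 0"
    using obtuse by (simp_all add: lorentz_simps)
  have "(lorentz y3 y4)^2 = lorentz y3 y3 * lorentz y4 y4"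
    using frame_complement_cauchy_schwarz_eq[OF extended_frame[OF y(1) norm(1)]] p(2) y(3,4) perp
    by (simp add: lorentz_sym)
  then have "(lorentz y3 y4)^2 = 2^2" using norm(3,4) by simp
  then have "lorentz y3 y4 = 2 \<or> lorentz y3 y4 = -2" by (simp only: power2_eq_iff)
  with obtuse(5) perp show ?thesis by auto
qed

lemma obtuse_triple_has_antipode:
  assumes y: "\<forall>u\<in>F. lorentz y1 u = 0" "\<forall>u\<in>F. lorentz yk u = 0" "\<forall>u\<in>F. lorentz yl u = 0"
    and norm: "lorentz y1 y1 = 2" "lorentz yk yk = 2" "lorentz yl yl = 2"
    and obtuse: "lorentz y1 yk \<le> 0" "lorentz y1 yl \<le> 0" "lorentz yk yl \<le> 0"
    and proj: "lorentz (yk - (lorentz y1 yk / 2) *\<^sub>R y1) (yl - (lorentz y1 yl / 2) *\<^sub>R y1) \<ge> 0"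
  shows "lorentz y1 yk = -2 \<or> lorentz y1 yl = -2"
proof -
  define ak where "ak = lorentz y1 yk / 2"
  define al where "al = lorentz y1 yl / 2"
  define zk where "zk = yk - ak *\<^sub>R y1"
  define zl where "zl = yl - al *\<^sub>R y1"
  have "ak * al \<ge> 0" using obtuse by (simp add: ak_def al_def mult_nonpos_nonpos)
  moreover have "lorentz zk zl = lorentz yk yl - 2 * ak * al"
    by (simp add: zk_def zl_def lorentz_simps lorentz_sym ak_def al_def norm algebra_simps)
  ultimately have "lorentz zk zl = 0" using obtuse(3) proj
    by (simp add: zk_def zl_def ak_def al_def)
  moreover have "\<forall>u\<in>insert y1 F. lorentz zk u = 0" "\<forall>u\<in>insert y1 F. lorentz zl u = 0"
    using y norm by (simp_all add: zk_def zl_def ak_def al_def lorentz_simps lorentz_sym)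
  then have "(lorentz zk zl)^2 = lorentz zk zk * lorentz zl zl"
    by (rule frame_complement_cauchy_schwarz_eq[OF extended_frame[OF y(1) norm(1)] p(2)])
  ultimately have "0 = lorentz zk zk * lorentz zl zl" by simp
  moreover have "lorentz zk zk = 2 - 2 * ak^2" "lorentz zl zl = 2 - 2 * al^2"
    by (simp_all add: zk_def zl_def lorentz_simps lorentz_sym ak_def al_def norm algebra_simps
        power2_eq_square)
  ultimately have "ak^2 = 1 \<or> al^2 = 1" by simp
  then show ?thesis using obtuse by (auto simp: ak_def al_def power2_eq_1_iff)
qed

lemma obtuse_quadruple_has_antipode:
  assumes y: "\<forall>u\<in>F. lorentz y1 u = 0" "\<forall>u\<in>F. lorentz y2 u = 0"
      "\<forall>u\<in>F. lorentz y3 u = 0" "\<forall>u\<in>F. lorentz y4 u = 0"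
    and norm: "lorentz y1 y1 = 2" "lorentz y2 y2 = 2" "lorentz y3 y3 = 2" "lorentz y4 y4 = 2"
    and obtuse: "lorentz y1 y2 \<le> 0" "lorentz y1 y3 \<le> 0" "lorentz y1 y4 \<le> 0"
      "lorentz y2 y3 \<le> 0" "lorentz y2 y4 \<le> 0" "lorentz y3 y4 \<le> 0"
  shows "lorentz y1 y2 = -2 \<or> lorentz y1 y3 = -2 \<or> lorentz y1 y4 = -2"
proof -
  define z where "z y = y - (lorentz y1 y / 2) *\<^sub>R y1" for y
  have zF: "\<forall>u\<in>insert y1 F. lorentz (z y) u = 0" if "\<forall>u\<in>F. lorentz y u = 0" for y
    using y(1) norm(1) that by (simp add: z_def lorentz_simps lorentz_sym)
  have "lorentz (z y2) (z y3) \<ge> 0 \<or> lorentz (z y2) (z y4) \<ge> 0 \<or> lorentz (z y3) (z y4) \<ge> 0"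
    using complement_triple_nonobtuse_pair[OF extended_frame[OF y(1) norm(1)] p(2)
        zF[OF y(2)] zF[OF y(3)] zF[OF y(4)]] p(1) by simp
  then show ?thesis
    using obtuse_triple_has_antipode[OF y(1,2,3) norm(1,2,3) obtuse(1,2,4)]
      obtuse_triple_has_antipode[OF y(1,2,4) norm(1,2,4) obtuse(1,3,5)]
      obtuse_triple_has_antipode[OF y(1,3,4) norm(1,3,4) obtuse(2,3,6)]
    unfolding z_def by blast
qed

lemma complement_obtuse_quadruple_square:
  assumes V: "V = {a0, b0, c0, e0}" "distinct [a0, b0, c0, e0]"
    and y: "\<And>u. u \<in> V \<Longrightarrow> \<forall>f\<in>F. lorentz (y u) f = 0"
    and norm: "\<And>u. u \<in> V \<Longrightarrow> lorentz (y u) (y u) = 2"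
    and obtuse: "\<And>u u'. u \<in> V \<Longrightarrow> u' \<in> V \<Longrightarrow> u \<noteq> u' \<Longrightarrow> lorentz (y u) (y u') \<le> 0"
  shows "\<exists>a b c e. V = {a, b, c, e} \<and> distinct [a, b, c, e] \<and>
    lorentz (y a) (y c) = -2 \<and> lorentz (y b) (y e) = -2 \<and>
    lorentz (y a) (y b) = 0 \<and> lorentz (y a) (y e) = 0 \<and>
    lorentz (y c) (y b) = 0 \<and> lorentz (y c) (y e) = 0"
proof -
  have inV: "a0 \<in> V" "b0 \<in> V" "c0 \<in> V" "e0 \<in> V" using V by auto
  have dst: "a0 \<noteq> b0" "a0 \<noteq> c0" "a0 \<noteq> e0" "b0 \<noteq> c0" "b0 \<noteq> e0" "c0 \<noteq> e0" using V by auto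
  note Y = y[OF inV(1)] y[OF inV(2)] y[OF inV(3)] y[OF inV(4)]
    norm[OF inV(1)] norm[OF inV(2)] norm[OF inV(3)] norm[OF inV(4)]
  have obt: "lorentz (y u) (y u') \<le> 0" if "u \<in> V" "u' \<in> V" "u \<noteq> u'" for u u'
    using obtuse that by blast
  note square = antipodal_pair_forces_square
  consider "lorentz (y a0) (y b0) = -2" | "lorentz (y a0) (y c0) = -2" | "lorentz (y a0) (y e0) = -2"
    using obtuse_quadruple_has_antipode[OF Y obt[OF inV(1,2) dst(1)] obt[OF inV(1,3) dst(2)]
        obt[OF inV(1,4) dst(3)] obt[OF inV(2,3) dst(4)] obt[OF inV(2,4) dst(5)]
        obt[OF inV(3,4) dst(6)]] by blast
  then show ?thesis
  proof cases
    case 1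
    with square[OF Y(1,2,3,4) Y(5,6,7,8)] inV dst obt
    have "lorentz (y c0) (y e0) = -2 \<and> lorentz (y a0) (y c0) = 0 \<and> lorentz (y a0) (y e0) = 0 \<and>
      lorentz (y b0) (y c0) = 0 \<and> lorentz (y b0) (y e0) = 0" by simp
    moreover have "V = {a0, c0, b0, e0}" "distinct [a0, c0, b0, e0]" using V by auto
    ultimately show ?thesis using 1 by blast
  next
    case 2
    with square[OF Y(1,3,2,4) Y(5,7,6,8)] inV dst obt
    have "lorentz (y b0) (y e0) = -2 \<and> lorentz (y a0) (y b0) = 0 \<and> lorentz (y a0) (y e0) = 0 \<and>
      lorentz (y c0) (y b0) = 0 \<and> lorentz (y c0) (y e0) = 0" by simp
    with 2 V show ?thesis by blast
  next
    case 3
    with square[OF Y(1,4,2,3) Y(5,8,6,7)] inV dst obt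
    have "lorentz (y b0) (y c0) = -2 \<and> lorentz (y a0) (y b0) = 0 \<and> lorentz (y a0) (y c0) = 0 \<and>
      lorentz (y e0) (y b0) = 0 \<and> lorentz (y e0) (y c0) = 0" by simp
    moreover have "V = {a0, b0, e0, c0}" "distinct [a0, b0, e0, c0]" using V by auto
    ultimately show ?thesis using 3 by blast
  qed
qed

end

text \<open>Inversive coordinates: unit vectors whose Lorentzian products encode the inversive
  distance of the corresponding balls and half-spaces.\<close>

definition ball_coords :: "real^'n \<Rightarrow> real \<Rightarrow> ((real^'n) \<times> real) \<times> real" where
  "ball_coords c r = (((1/r) *\<^sub>R c, (1 - inner c c + r^2) / (2*r)), (1 + inner c c - r^2) / (2*r))"

definition halfspace_coords :: "real^'n \<Rightarrow> real \<Rightarrow> ((real^'n) \<times> real) \<times> real" where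
  "halfspace_coords a b = ((- (1/norm a) *\<^sub>R a, b / norm a), - (b / norm a))"

lemma lorentz_ball_ball: assumes "r > 0" "r' > 0"
  shows "lorentz (ball_coords c r) (ball_coords c' r') = (r^2 + r'^2 - (dist c c')^2) / (2*r*r')"
proof -
  have d: "(dist c c')^2 = inner c c - 2 * inner c c' + inner c' c'"
    by (simp add: dist_norm power2_norm_eq_inner inner_diff_left inner_diff_right inner_commute)
  show ?thesis using assms unfolding d
    by (simp add: lorentz_def ball_coords_def field_simps power2_eq_square)
qed

lemma lorentz_ball_self: assumes "r > 0" shows "lorentz (ball_coords c r) (ball_coords c r) = 1"
  using lorentz_ball_ball[OF assms assms, of c c] assms by (simp add: power2_eq_square)

lemma lorentz_ball_halfspace: assumes "r > 0" "a \<noteq> 0"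
  shows "lorentz (ball_coords c r) (halfspace_coords a b) = (b - inner a c) / (norm a * r)"
  using assms
  by (simp add: lorentz_def ball_coords_def halfspace_coords_def field_simps power2_eq_square
      inner_commute)

lemma lorentz_halfspace_halfspace: assumes "a \<noteq> 0" "a' \<noteq> 0"
  shows "lorentz (halfspace_coords a b) (halfspace_coords a' b') = inner a a' / (norm a * norm a')"
  using assms by (simp add: lorentz_def halfspace_coords_def field_simps)

lemma lorentz_halfspace_self:
  assumes "a \<noteq> 0"
  shows "lorentz (halfspace_coords a b) (halfspace_coords a b) = 1"
  using lorentz_halfspace_halfspace[OF assms assms] assms
  by (simp add: power2_norm_eq_inner[symmetric] power2_eq_square)

abbreviation dball_ball :: "real^'n \<Rightarrow> real \<Rightarrow> (real^'n) option set" where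
  "dball_ball c r \<equiv> Some ` cball c r"

abbreviation dball_exterior :: "real^'n \<Rightarrow> real \<Rightarrow> (real^'n) option set" where
  "dball_exterior c r \<equiv> insert None (Some ` (- ball c r))"

abbreviation dball_halfspace :: "real^'n \<Rightarrow> real \<Rightarrow> (real^'n) option set" where
  "dball_halfspace a b \<equiv> insert None (Some ` {x. inner a x \<le> b})"

lemma ext_open_ball: "ext_open (Some ` ball c r)"
proof -
  have eq: "{x. Some x \<in> Some ` ball c r} = ball c r" by auto
  show ?thesis unfolding ext_open_def eq by simp
qed

lemma ext_open_exterior: "ext_open (insert None (Some ` (- cball c r)))"
proof -
  have eq: "{x. Some x \<in> insert None (Some ` (- cball c r))} = - cball c r" by auto
  have eq2: "{x. Some x \<notin> insert None (Some ` (- cball c r))} = cball c r" by auto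
  show ?thesis unfolding ext_open_def eq eq2 by (simp add: open_Compl)
qed

lemma ext_open_halfspace: "a \<noteq> 0 \<Longrightarrow> ext_open (Some ` {x. inner a x < b})"
  by (simp add: ext_open_def inj_image_mem_iff open_halfspace_lt)

lemma ext_interior_maximal: "ext_open U \<Longrightarrow> U \<subseteq> S \<Longrightarrow> U \<subseteq> ext_interior S"
  by (auto simp: ext_interior_def)

lemma ball_subset_ext_interior: "Some ` ball c r \<subseteq> ext_interior (dball_ball c r)"
  by (rule ext_interior_maximal[OF ext_open_ball]) auto

lemma exterior_subset_ext_interior:
  "insert None (Some ` (- cball c r)) \<subseteq> ext_interior (dball_exterior c r)"
  by (rule ext_interior_maximal[OF ext_open_exterior]) auto

lemma halfspace_subset_ext_interior:
  "a \<noteq> 0 \<Longrightarrow> Some ` {x. inner a x < b} \<subseteq> ext_interior (dball_halfspace a b)"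
  by (rule ext_interior_maximal[OF ext_open_halfspace]) auto

lemma ext_interior_cball_subset: "ext_interior (dball_ball c r) \<subseteq> Some ` ball c r"
proof
  fix z assume "z \<in> ext_interior (dball_ball c r)"
  then obtain U where U: "ext_open U" "U \<subseteq> dball_ball c r" "z \<in> U" by (auto simp: ext_interior_def)
  then obtain x where z: "z = Some x" by auto
  have "open {x. Some x \<in> U}" using U by (simp add: ext_open_def)
  moreover have "{x. Some x \<in> U} \<subseteq> cball c r" using U by auto
  ultimately have "{x. Some x \<in> U} \<subseteq> interior (cball c r)" by (intro interior_maximal)
  thus "z \<in> Some ` ball c r" using U z by auto
qed

lemma ext_interior_exterior_subset:
  assumes "r > 0"
  shows "ext_interior (dball_exterior c r) \<subseteq> insert None (Some ` (- cball c r))"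
proof
  fix z assume "z \<in> ext_interior (dball_exterior c r)"
  then obtain U where U: "ext_open U" "U \<subseteq> dball_exterior c r" "z \<in> U"
    by (auto simp: ext_interior_def)
  show "z \<in> insert None (Some ` (- cball c r))"
  proof (cases z)
    case None then show ?thesis by simp
  next
    case (Some x)
    have "open {x. Some x \<in> U}" using U by (simp add: ext_open_def)
    moreover have "{x. Some x \<in> U} \<subseteq> - ball c r" using U by auto
    ultimately have "{x. Some x \<in> U} \<subseteq> interior (- ball c r)" by (intro interior_maximal)
    also have "interior (- ball c r) = - cball c r"
      using assms by (simp add: interior_complement closure_ball)
    finally show ?thesis using U Some by auto
  qed
qed

lemma Ex1_mem_image_Some: "(\<exists>!p. p \<in> Some ` C) \<longleftrightarrow> (\<exists>!x. x \<in> C)"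
  by (auto simp: Ex1_def)

lemma tangent_Some_Some: "tangent (Some ` A) (Some ` B) \<longleftrightarrow> (\<exists>!x. x \<in> A \<inter> B)"
proof -
  have "Some ` A \<inter> Some ` B = Some ` (A \<inter> B)" by auto
  thus ?thesis by (simp add: tangent_def Ex1_mem_image_Some)
qed

lemma tangent_Some_None: "tangent (Some ` A) (insert None (Some ` B)) \<longleftrightarrow> (\<exists>!x. x \<in> A \<inter> B)"
proof -
  have "Some ` A \<inter> insert None (Some ` B) = Some ` (A \<inter> B)" by auto
  thus ?thesis by (simp add: tangent_def Ex1_mem_image_Some)
qed

lemma tangent_None_None: "tangent (insert None (Some ` A)) (insert None (Some ` B)) \<longleftrightarrow> A \<inter> B = {}"
proof -
  have e: "insert None (Some ` A) \<inter> insert None (Some ` B) = insert None (Some ` (A \<inter> B))" by auto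
  show ?thesis unfolding tangent_def e
  proof
    assume "\<exists>!p. p \<in> insert None (Some ` (A \<inter> B))"
    thus "A \<inter> B = {}" by auto
  next
    assume "A \<inter> B = {}"
    thus "\<exists>!p. p \<in> insert None (Some ` (A \<inter> B))" by auto
  qed
qed

lemma tangent_sym: "tangent S T = tangent T S"
  by (simp add: tangent_def Int_commute)

lemma dist_sum_eq_imp_between:
  fixes c c' x :: "'a::real_inner"
  assumes "dist c x \<le> r" "dist x c' \<le> r'" "dist c c' \<ge> r + r'" "r + r' > 0"
  shows "x = c + (r / (r + r')) *\<^sub>R (c' - c)"
proof -
  have t: "dist c c' \<le> dist c x + dist x c'" by (rule dist_triangle)
  have e1: "norm (x - c) = r" "norm (c' - x) = r'"
    using assms t by (auto simp: dist_norm norm_minus_commute)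
  have "norm ((x - c) + (c' - x)) = norm (x - c) + norm (c' - x)"
    using assms t e1 by (simp add: dist_norm norm_minus_commute)
  hence "norm (x - c) *\<^sub>R (c' - x) = norm (c' - x) *\<^sub>R (x - c)" by (rule iffD1[OF norm_triangle_eq])
  hence "r *\<^sub>R (c' - x) = r' *\<^sub>R (x - c)" using e1 by simp
  hence h: "(r + r') *\<^sub>R (x - c) = r *\<^sub>R (c' - c)" by (simp add: algebra_simps)
  have "x - c = (1/(r+r')) *\<^sub>R ((r+r') *\<^sub>R (x - c))" using assms(4) by simp
  also have "\<dots> = (r/(r+r')) *\<^sub>R (c' - c)" unfolding h by simp
  finally show ?thesis by (simp add: algebra_simps)
qed

lemma tangent_cball_cball_iff:
  fixes c c' :: "real^'n"
  assumes "r > 0" "r' > 0" "dist c c' \<ge> r + r'"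
  shows "tangent (dball_ball c r) (dball_ball c' r') \<longleftrightarrow> dist c c' = r + r'"
proof -
  have "(\<exists>!x. x \<in> cball c r \<inter> cball c' r') \<longleftrightarrow> dist c c' = r + r'"
  proof
    assume "\<exists>!x. x \<in> cball c r \<inter> cball c' r'"
    then obtain x where "dist c x \<le> r" "dist c' x \<le> r'" by auto
    hence "dist c c' \<le> r + r'" by (metis add_mono dist_commute dist_triangle order_trans)
    thus "dist c c' = r + r'" using assms by simp
  next
    assume d: "dist c c' = r + r'"
    define x0 where "x0 = c + (r / (r + r')) *\<^sub>R (c' - c)"
    have "dist c x0 = r" using assms d
      by (simp add: x0_def dist_norm norm_minus_commute)
    moreover have "dist c' x0 = r'"
    proof -
      have e: "1 - r/(r+r') = r'/(r+r')" using assms by (simp add: field_simps)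
      have "c' - x0 = (1 - r/(r+r')) *\<^sub>R (c' - c)" by (simp add: x0_def algebra_simps)
      hence "c' - x0 = (r' / (r + r')) *\<^sub>R (c' - c)" unfolding e .
      thus ?thesis using assms d by (simp add: dist_norm norm_minus_commute)
    qed
    ultimately have x0: "x0 \<in> cball c r \<inter> cball c' r'" by simp
    show "\<exists>!x. x \<in> cball c r \<inter> cball c' r'"
    proof (rule ex1I[where a=x0])
      show "x0 \<in> cball c r \<inter> cball c' r'" by (rule x0)
    next
      fix x assume "x \<in> cball c r \<inter> cball c' r'"
      hence "dist c x \<le> r" "dist x c' \<le> r'" by (auto simp: dist_commute)
      from dist_sum_eq_imp_between[OF this] assms show "x = x0" by (simp add: x0_def)
    qed
  qed
  thus ?thesis by (simp add: tangent_Some_Some)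
qed

lemma sphere_not_singleton:
  fixes c :: "'a::{real_normed_vector, perfect_space}"
  assumes "r > 0"
  shows "\<not> (\<exists>!x. x \<in> cball c r \<inter> - ball c r)"
proof
  assume unique: "\<exists>!x. x \<in> cball c r \<inter> - ball c r"
  obtain v :: 'a where v: "norm v = r" using vector_choose_size assms less_imp_le by blast
  then have "c + v \<in> cball c r \<inter> - ball c r" "c - v \<in> cball c r \<inter> - ball c r"
    by (auto simp: dist_norm)
  with unique have "c + v = c - v" by blast
  with v assms show False by (simp add: eq_neg_iff_add_eq_0 flip: scaleR_2)
qed

lemma tangent_cball_exterior_iff:
  fixes c c' :: "real^'n"
  assumes "r > 0" "R > 0" "dist c c' + r \<le> R"
  shows "tangent (dball_ball c r) (dball_exterior c' R) \<longleftrightarrow> dist c c' + r = R \<and> c \<noteq> c'"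
proof -
  have "(\<exists>!x. x \<in> cball c r \<inter> - ball c' R) \<longleftrightarrow> dist c c' + r = R \<and> c \<noteq> c'"
  proof
    assume ex: "\<exists>!x. x \<in> cball c r \<inter> - ball c' R"
    then obtain x where "dist c x \<le> r" "dist c' x \<ge> R" by auto
    moreover have "dist c' x \<le> dist c' c + dist c x" by (rule dist_triangle)
    ultimately have e: "dist c c' + r = R" using assms by (simp add: dist_commute)
    have "c \<noteq> c'" using sphere_not_singleton[OF assms(1), of c] ex e by auto
    thus "dist c c' + r = R \<and> c \<noteq> c'" using e by simp
  next
    assume h: "dist c c' + r = R \<and> c \<noteq> c'"
    define \<delta> where "\<delta> = dist c c'"
    have dpos: "\<delta> > 0" using h by (simp add: \<delta>_def)
    define x0 where "x0 = c' + ((\<delta> + r) / \<delta>) *\<^sub>R (c - c')"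
    have n: "norm (c - c') = \<delta>" by (simp add: \<delta>_def dist_norm)
    have "dist c' x0 = \<delta> + r" using dpos assms n
      by (simp add: x0_def dist_norm norm_minus_commute)
    moreover have "x0 - c = (r / \<delta>) *\<^sub>R (c - c')"
    proof -
      have e: "(\<delta> + r) / \<delta> - 1 = r / \<delta>" using dpos by (simp add: field_simps)
      have "x0 - c = ((\<delta> + r) / \<delta> - 1) *\<^sub>R (c - c')" by (simp add: x0_def algebra_simps)
      thus ?thesis unfolding e .
    qed
    hence "norm (x0 - c) = r" using dpos assms n by simp
    hence "dist c x0 = r" by (simp add: dist_norm norm_minus_commute)
    ultimately have x0: "x0 \<in> cball c r \<inter> - ball c' R" using h by (simp add: \<delta>_def)
    show "\<exists>!x. x \<in> cball c r \<inter> - ball c' R"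
    proof (rule ex1I[where a=x0])
      show "x0 \<in> cball c r \<inter> - ball c' R" by (rule x0)
    next
      fix x assume "x \<in> cball c r \<inter> - ball c' R"
      hence a1: "dist c x \<le> r" "dist c' x \<ge> \<delta> + r" using h by (auto simp: \<delta>_def)
      have "c = c' + (\<delta> / (\<delta> + r)) *\<^sub>R (x - c')"
      proof (rule dist_sum_eq_imp_between)
        show "dist c' c \<le> \<delta>" by (simp add: \<delta>_def dist_commute)
        show "dist c x \<le> r" by (rule a1(1))
        show "\<delta> + r \<le> dist c' x" by (rule a1(2))
        show "0 < \<delta> + r" using dpos assms by simp
      qed
      hence "(\<delta> + r) *\<^sub>R (c - c') = \<delta> *\<^sub>R (x - c')" using dpos assms by simp
      hence "x - c' = ((\<delta> + r) / \<delta>) *\<^sub>R (c - c')" using dpos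
        by (metis (no_types, lifting) divide_inverse_commute dpos less_irrefl scaleR_one
             scaleR_scaleR inverse_eq_divide left_inverse)
      thus "x = x0" by (simp add: x0_def algebra_simps)
    qed
  qed
  thus ?thesis by (simp add: tangent_Some_None)
qed

lemma tangent_cball_halfspace_iff:
  fixes c a :: "real^'n"
  assumes "r > 0" "a \<noteq> 0" "b \<le> inner a c - r * norm a"
  shows "tangent (dball_ball c r) (dball_halfspace a b) \<longleftrightarrow> b = inner a c - r * norm a"
proof -
  have cs: "inner a (c - x) \<le> norm a * dist c x" for x
    by (metis dist_norm norm_cauchy_schwarz)
  have "(\<exists>!x. x \<in> cball c r \<inter> {x. inner a x \<le> b}) \<longleftrightarrow> b = inner a c - r * norm a"
  proof
    assume "\<exists>!x. x \<in> cball c r \<inter> {x. inner a x \<le> b}"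
    then obtain x where x: "dist c x \<le> r" "inner a x \<le> b" by auto
    have "inner a (c - x) \<le> norm a * r"
      using cs[of x] x(1) by (meson mult_left_mono norm_ge_zero order_trans)
    thus "b = inner a c - r * norm a" using x assms(3) by (simp add: inner_diff_right algebra_simps)
  next
    assume h: "b = inner a c - r * norm a"
    have na: "norm a > 0" using assms by simp
    define x0 where "x0 = c - (r / norm a) *\<^sub>R a"
    have "x0 \<in> cball c r \<inter> {x. inner a x \<le> b}"
      using na assms h
      by (simp add: x0_def dist_norm inner_diff_right power2_norm_eq_inner[symmetric] power2_eq_square)
    then show "\<exists>!x. x \<in> cball c r \<inter> {x. inner a x \<le> b}"
    proof (rule ex1I[where a=x0])
      fix x assume "x \<in> cball c r \<inter> {x. inner a x \<le> b}"
      hence x: "dist c x \<le> r" "inner a x \<le> b" by auto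
      have "r * norm a \<le> inner a (c - x)" using x h by (simp add: inner_diff_right)
      also have "\<dots> \<le> norm a * dist c x" by (rule cs)
      finally have "r \<le> dist c x" using na by (simp add: mult.commute)
      hence d: "dist c x = r" using x by simp
      have "inner a (c - x) = norm a * norm (c - x)"
        using \<open>r * norm a \<le> inner a (c - x)\<close> cs[of x] d by (simp add: dist_norm mult.commute)
      hence "norm a *\<^sub>R (c - x) = norm (c - x) *\<^sub>R a" by (simp add: norm_cauchy_schwarz_eq)
      hence "norm a *\<^sub>R (c - x) = r *\<^sub>R a" using d by (simp add: dist_norm)
      hence "c - x = (r / norm a) *\<^sub>R a" using na
        by (metis (no_types, lifting) divide_inverse_commute less_irrefl scaleR_one
             scaleR_scaleR inverse_eq_divide left_inverse)
      thus "x = x0" by (simp add: x0_def algebra_simps)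
    qed
  qed
  thus ?thesis by (simp add: tangent_Some_None)
qed

lemma disjoint_cballs_dist:
  fixes c c' :: "real^'n"
  assumes "r > 0" "r' > 0" "ext_interior (dball_ball c r) \<inter> ext_interior (dball_ball c' r') = {}"
  shows "r + r' \<le> dist c c'"
proof (rule ccontr)
  assume "\<not> ?thesis"
  hence lt: "dist c c' < r + r'" by simp
  have "Some ` ball c r \<inter> Some ` ball c' r' = {}"
    using assms(3) ball_subset_ext_interior[of c r] ball_subset_ext_interior[of c' r'] by blast
  hence e: "ball c r \<inter> ball c' r' = {}" by auto
  define x0 where "x0 = c + (r / (r + r')) *\<^sub>R (c' - c)"
  have "norm (x0 - c) = r / (r + r') * dist c c'" using assms
    by (simp add: x0_def dist_norm norm_minus_commute)
  also have "\<dots> < r / (r + r') * (r + r')" using lt assms by (intro mult_strict_left_mono) auto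
  also have "\<dots> = r" using assms by simp
  finally have 1: "x0 \<in> ball c r" by (simp add: dist_norm norm_minus_commute)
  have ee: "1 - r/(r+r') = r'/(r+r')" using assms by (simp add: field_simps)
  have "c' - x0 = (1 - r/(r+r')) *\<^sub>R (c' - c)" by (simp add: x0_def algebra_simps)
  hence "c' - x0 = (r' / (r + r')) *\<^sub>R (c' - c)" unfolding ee .
  hence "norm (c' - x0) = r' / (r + r') * dist c c'"
    using assms by (simp add: dist_norm norm_minus_commute)
  also have "\<dots> < r' / (r + r') * (r + r')" using lt assms by (intro mult_strict_left_mono) auto
  also have "\<dots> = r'" using assms by simp
  finally have 2: "x0 \<in> ball c' r'" by (simp add: dist_norm)
  show False using 1 2 e by blast
qed

lemma disjoint_cball_exterior_dist:
  fixes c c' :: "real^'n"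
  assumes "r > 0" "ext_interior (dball_ball c r) \<inter> ext_interior (dball_exterior c' R) = {}"
  shows "dist c c' + r \<le> R"
proof -
  have "Some ` ball c r \<inter> insert None (Some ` (- cball c' R)) = {}"
    using assms(2) ball_subset_ext_interior[of c r] exterior_subset_ext_interior[of c' R] by blast
  hence "ball c r \<subseteq> cball c' R" by auto
  thus ?thesis using assms(1) by (simp add: ball_subset_cball_iff)
qed

lemma disjoint_cball_halfspace_dist:
  fixes c a :: "real^'n"
  assumes "r > 0" "a \<noteq> 0" "ext_interior (dball_ball c r) \<inter> ext_interior (dball_halfspace a b) = {}"
  shows "b \<le> inner a c - r * norm a"
proof (rule ccontr)
  assume "\<not> ?thesis"
  hence lt: "inner a c - r * norm a < b" by simp
  have "Some ` ball c r \<inter> Some ` {x. inner a x < b} = {}"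
    using assms(3) ball_subset_ext_interior[of c r] halfspace_subset_ext_interior[OF assms(2), of b]
    by blast
  hence e: "ball c r \<inter> {x. inner a x < b} = {}" by auto
  have na: "norm a > 0" using assms by simp
  define s where "s = (inner a c - b) / norm a"
  have sr: "s < r" using lt na by (simp add: s_def field_simps)
  define t where "t = (max s 0 + r) / 2"
  have t: "0 \<le> t" "t < r" "s < t" using sr assms(1) by (auto simp: t_def max_def)
  define x where "x = c - (t / norm a) *\<^sub>R a"
  have "dist c x = t" using na t by (simp add: x_def dist_norm)
  hence 1: "x \<in> ball c r" using t by simp
  have "inner a x = inner a c - t * norm a" using na
    by (simp add: x_def inner_diff_right power2_norm_eq_inner[symmetric] power2_eq_square)
  also have "\<dots> < inner a c - s * norm a" using t na by simp
  also have "\<dots> = b" using na by (simp add: s_def)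
  finally have 2: "inner a x < b" .
  show False using 1 2 e by blast
qed

lemma disjoint_unit_halfspaces:
  fixes n n' :: "'a::real_inner"
  assumes unit: "norm n = 1" "norm n' = 1"
    and disjoint: "\<And>x. inner n x < \<beta> \<Longrightarrow> inner n' x < \<beta>' \<Longrightarrow> False"
  shows "n' = - n" "\<beta> + \<beta>' \<le> 0"
proof -
  have "\<bar>inner n n'\<bar> \<le> 1" using Cauchy_Schwarz_ineq2[of n n'] unit by simp
  have "inner n n' = -1"
  proof (rule ccontr)
    assume "inner n n' \<noteq> -1"
    with \<open>\<bar>inner n n'\<bar> \<le> 1\<close> have pos: "1 + inner n n' > 0" by linarith
    define t where "t = (\<bar>\<beta>\<bar> + \<bar>\<beta>'\<bar> + 1) / (1 + inner n n')"
    have "inner n (- t *\<^sub>R (n + n')) = - t * (1 + inner n n')"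
      "inner n' (- t *\<^sub>R (n + n')) = - t * (1 + inner n n')"
      using unit by (simp_all add: inner_add_right power2_norm_eq_inner[symmetric] inner_commute)
    moreover have "t * (1 + inner n n') = \<bar>\<beta>\<bar> + \<bar>\<beta>'\<bar> + 1" using pos by (simp add: t_def)
    ultimately show False using disjoint[of "- t *\<^sub>R (n + n')"] by linarith
  qed
  moreover have "inner n n = 1" "inner n' n' = 1"
    using unit by (simp_all add: power2_norm_eq_inner[symmetric])
  ultimately have "norm (n + n') ^ 2 = 0"
    by (simp add: power2_norm_eq_inner inner_add_left inner_add_right inner_commute)
  then show n': "n' = - n" by (simp add: eq_neg_iff_add_eq_0 add.commute)
  show "\<beta> + \<beta>' \<le> 0"
  proof (rule ccontr)
    assume "\<not> ?thesis"
    moreover have "inner n (((\<beta> - \<beta>') / 2) *\<^sub>R n) = (\<beta> - \<beta>') / 2"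
      using unit by (simp add: power2_norm_eq_inner[symmetric])
    ultimately show False
      using disjoint[of "((\<beta> - \<beta>') / 2) *\<^sub>R n"] n' by (simp add: field_simps)
  qed
qed

lemma disjoint_halfspaces:
  fixes a a' :: "real^'n"
  assumes a: "a \<noteq> 0" "a' \<noteq> 0"
    and "ext_interior (dball_halfspace a b) \<inter> ext_interior (dball_halfspace a' b') = {}"
  shows "inner a a' = - (norm a * norm a')" "b / norm a + b' / norm a' \<le> 0"
proof -
  have "Some ` {x. inner a x < b} \<inter> Some ` {x. inner a' x < b'} = {}"
    using assms(3) halfspace_subset_ext_interior[OF a(1), of b]
      halfspace_subset_ext_interior[OF a(2), of b'] by blast
  then have "inner ((1 / norm a) *\<^sub>R a) x < b / norm a \<Longrightarrow>
      inner ((1 / norm a') *\<^sub>R a') x < b' / norm a' \<Longrightarrow> False" for x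
    using a by (auto simp: field_simps)
  note unit = disjoint_unit_halfspaces[of "(1 / norm a) *\<^sub>R a" "(1 / norm a') *\<^sub>R a'", OF _ _ this]
  from unit(1) a have "inner ((1 / norm a) *\<^sub>R a) ((1 / norm a') *\<^sub>R a') = -1"
    by (simp add: power2_norm_eq_inner[symmetric])
  with a show "inner a a' = - (norm a * norm a')" by (simp add: field_simps)
  from unit(2) a show "b / norm a + b' / norm a' \<le> 0" by simp
qed

lemma exteriors_not_disjoint:
  "ext_interior (dball_exterior c r) \<inter> ext_interior (dball_exterior c' r') = {} \<Longrightarrow> False"
  using exterior_subset_ext_interior[of c r] exterior_subset_ext_interior[of c' r'] by blast

lemma exterior_halfspace_not_disjoint:
  fixes c a :: "real^'n"
  assumes "a \<noteq> 0" "ext_interior (dball_exterior c R) \<inter> ext_interior (dball_halfspace a b) = {}"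
  shows False
proof -
  have "insert None (Some ` (- cball c R)) \<inter> Some ` {x. inner a x < b} = {}"
    using assms(2) exterior_subset_ext_interior[of c R] halfspace_subset_ext_interior[OF assms(1), of b]
    by blast
  hence E: "(- cball c R) \<inter> {x. inner a x < b} = {}" by auto
  have e: False if "dist c x > R" "inner a x < b" for x
  proof -
    have "x \<in> (- cball c R) \<inter> {x. inner a x < b}" using that by simp
    thus False using E by blast
  qed
  have na: "norm a > 0" using assms by simp
  define t where "t = \<bar>R\<bar> + \<bar>(inner a c - b) / norm a\<bar> + 1"
  define x where "x = c - (t / norm a) *\<^sub>R a"
  have t0: "t > 0" by (simp add: t_def add_nonneg_pos)
  have "dist c x = t" using na t0 by (simp add: x_def dist_norm)
  moreover have "0 \<le> \<bar>(inner a c - b) / norm a\<bar>" by simp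
  ultimately have 1: "dist c x > R" unfolding t_def by linarith
  have "inner a x = inner a c - t * norm a" using na
    by (simp add: x_def inner_diff_right power2_norm_eq_inner[symmetric] power2_eq_square)
  moreover have "t * norm a > inner a c - b"
  proof -
    have "(inner a c - b) / norm a \<le> \<bar>(inner a c - b) / norm a\<bar>" by (rule abs_ge_self)
    hence "(inner a c - b) / norm a < t" unfolding t_def by linarith
    thus ?thesis using na by (simp add: field_simps)
  qed
  ultimately have 2: "inner a x < b" by simp
  show False by (rule e[OF 1 2])
qed

definition inversive_coords :: "(real^'n) option set \<Rightarrow> ((real^'n) \<times> real) \<times> real \<Rightarrow> bool" where
  "inversive_coords S v \<longleftrightarrow> (\<exists>c r. r > 0 \<and> S = dball_ball c r \<and> v = ball_coords c r) \<or>
     (\<exists>c r. r > 0 \<and> S = dball_exterior c r \<and> v = - ball_coords c r) \<or>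
     (\<exists>a b. a \<noteq> 0 \<and> S = dball_halfspace a b \<and> v = halfspace_coords a b)"

lemma inversive_coords_exist: "is_dball S \<Longrightarrow> \<exists>v. inversive_coords S v"
  unfolding is_dball_def inversive_coords_def by blast

lemma inversive_coords_unit: "inversive_coords S v \<Longrightarrow> lorentz v v = 1"
  unfolding inversive_coords_def
  by (auto simp: lorentz_ball_self lorentz_halfspace_self lorentz_simps)

text \<open>The exception \<open>w = - v\<close> is a ball together with its closed exterior, which share a
  whole sphere.\<close>

definition packing_relation ::
    "(real^'n) option set \<Rightarrow> ((real^'n) \<times> real) \<times> real \<Rightarrow>
     (real^'n) option set \<Rightarrow> ((real^'n) \<times> real) \<times> real \<Rightarrow> bool" where
  "packing_relation S v T w \<longleftrightarrow> lorentz v w \<le> -1 \<and> (tangent S T \<longrightarrow> lorentz v w = -1) \<and>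
     (lorentz v w = -1 \<and> w \<noteq> - v \<longrightarrow> tangent S T)"

lemma packing_relation_sym: "packing_relation S v T w \<Longrightarrow> packing_relation T w S v"
  unfolding packing_relation_def by (auto simp: lorentz_sym tangent_sym)

lemma packing_relation_cball_cball:
  fixes c c' :: "real^'n"
  assumes "r > 0" "r' > 0"
    and "ext_interior (dball_ball c r) \<inter> ext_interior (dball_ball c' r') = {}"
  shows "packing_relation (dball_ball c r) (ball_coords c r) (dball_ball c' r') (ball_coords c' r')"
proof -
  define \<delta> where "\<delta> = dist c c'"
  have d: "r + r' \<le> \<delta>" using disjoint_cballs_dist[OF assms] by (simp add: \<delta>_def)
  have l: "lorentz (ball_coords c r) (ball_coords c' r') = -1 + ((r+r')^2 - \<delta>^2) / (2*r*r')"
    using assms(1,2) by (simp add: lorentz_ball_ball \<delta>_def field_simps power2_eq_square)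
  have sq: "(r+r')^2 \<le> \<delta>^2" using d assms by (intro power_mono) auto
  have sqe: "(r+r')^2 = \<delta>^2 \<longleftrightarrow> \<delta> = r + r'" using d assms by (auto simp: power2_eq_iff)
  have q: "((r+r')^2 - \<delta>^2) / (2*r*r') \<le> 0" using sq assms by (intro divide_nonpos_pos) auto
  have q0: "((r+r')^2 - \<delta>^2) / (2*r*r') = 0 \<longleftrightarrow> \<delta> = r + r'" using assms sqe by auto
  have t: "tangent (dball_ball c r) (dball_ball c' r') \<longleftrightarrow> \<delta> = r + r'"
    using tangent_cball_cball_iff[OF assms(1,2)] d by (simp add: \<delta>_def)
  show ?thesis unfolding packing_relation_def l t using q q0 by auto
qed

lemma packing_relation_cball_exterior:
  fixes c c' :: "real^'n"
  assumes "r > 0" "R > 0"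
    and "ext_interior (dball_ball c r) \<inter> ext_interior (dball_exterior c' R) = {}"
  shows "packing_relation (dball_ball c r) (ball_coords c r)
    (dball_exterior c' R) (- ball_coords c' R)"
proof -
  define \<delta> where "\<delta> = dist c c'"
  have d: "\<delta> + r \<le> R" using disjoint_cball_exterior_dist[OF assms(1,3)] by (simp add: \<delta>_def)
  have d0: "\<delta> \<ge> 0" by (simp add: \<delta>_def)
  have l: "lorentz (ball_coords c r) (- ball_coords c' R) = -1 + (\<delta>^2 - (R - r)^2) / (2*r*R)"
    using assms(1,2)
    by (simp add: lorentz_simps lorentz_ball_ball \<delta>_def field_simps power2_eq_square)
  have sq: "\<delta>^2 \<le> (R - r)^2" using d d0 by (intro power_mono) auto
  have sqe: "\<delta>^2 = (R - r)^2 \<longleftrightarrow> \<delta> + r = R" using d d0 by (auto simp: power2_eq_iff)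
  have q: "(\<delta>^2 - (R - r)^2) / (2*r*R) \<le> 0" using sq assms by (intro divide_nonpos_pos) auto
  have q0: "(\<delta>^2 - (R - r)^2) / (2*r*R) = 0 \<longleftrightarrow> \<delta> + r = R" using assms sqe by auto
  have t: "tangent (dball_ball c r) (dball_exterior c' R) \<longleftrightarrow> \<delta> + r = R \<and> c \<noteq> c'"
    using tangent_cball_exterior_iff[OF assms(1,2)] d by (simp add: \<delta>_def)
  have neg: "\<delta> + r = R \<Longrightarrow> c = c' \<Longrightarrow> - ball_coords c' R = - ball_coords c r" by (simp add: \<delta>_def)
  show ?thesis unfolding packing_relation_def l t using q q0 neg by auto
qed

lemma packing_relation_cball_halfspace:
  fixes c a :: "real^'n"
  assumes "r > 0" "a \<noteq> 0"
    and "ext_interior (dball_ball c r) \<inter> ext_interior (dball_halfspace a b) = {}"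
  shows "packing_relation (dball_ball c r) (ball_coords c r)
    (dball_halfspace a b) (halfspace_coords a b)"
proof -
  have d: "b \<le> inner a c - r * norm a" by (rule disjoint_cball_halfspace_dist[OF assms])
  have na: "norm a > 0" using assms by simp
  define e where "e = (b - (inner a c - r * norm a)) / (norm a * r)"
  have l: "lorentz (ball_coords c r) (halfspace_coords a b) = -1 + e"
    using assms(1) na by (simp add: lorentz_ball_halfspace[OF assms(1,2)] e_def field_simps)
  have q: "e \<le> 0" using d na assms unfolding e_def by (intro divide_nonpos_pos) auto
  have q0: "e = 0 \<longleftrightarrow> b = inner a c - r * norm a" using na assms by (auto simp: e_def)
  have t: "tangent (dball_ball c r) (dball_halfspace a b) \<longleftrightarrow> b = inner a c - r * norm a"
    by (rule tangent_cball_halfspace_iff[OF assms(1,2) d])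
  show ?thesis unfolding packing_relation_def l t using q q0 by auto
qed

lemma packing_relation_halfspaces:
  fixes a a' :: "real^'n"
  assumes "a \<noteq> 0" "a' \<noteq> 0"
    "ext_interior (dball_halfspace a b) \<inter> ext_interior (dball_halfspace a' b') = {}"
  shows "packing_relation (dball_halfspace a b) (halfspace_coords a b)
    (dball_halfspace a' b') (halfspace_coords a' b')"
proof -
  note d = disjoint_halfspaces[OF assms]
  have na: "norm a > 0" "norm a' > 0" using assms by auto
  have l: "lorentz (halfspace_coords a b) (halfspace_coords a' b') = -1"
    using d(1) na by (simp add: lorentz_halfspace_halfspace[OF assms(1,2)])
  have "inner (-a) a' = norm (-a) * norm a'" using d(1) by simp
  hence "norm (-a) *\<^sub>R a' = norm a' *\<^sub>R (-a)" by (rule iffD1[OF norm_cauchy_schwarz_eq])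
  hence par: "norm a *\<^sub>R a' = - (norm a' *\<^sub>R a)" by simp
  have par2: "(1 / norm a') *\<^sub>R a' = - ((1 / norm a) *\<^sub>R a)"
  proof -
    have "(1 / norm a') *\<^sub>R a' = (1 / (norm a * norm a')) *\<^sub>R (norm a *\<^sub>R a')" using na by simp
    also have "\<dots> = - ((1 / norm a) *\<^sub>R a)" unfolding par using na by simp
    finally show ?thesis .
  qed
  have ia: "inner a' x = - (norm a' / norm a) * inner a x" for x
  proof -
    have "inner ((1 / norm a') *\<^sub>R a') x = inner (- ((1 / norm a) *\<^sub>R a)) x" by (simp only: par2)
    thus ?thesis using na by (simp add: field_simps)
  qed
  have tang: "tangent (dball_halfspace a b) (dball_halfspace a' b')"
    if lt: "b / norm a + b' / norm a' < 0"
  proof -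
    have "{x. inner a x \<le> b} \<inter> {x. inner a' x \<le> b'} = {}"
    proof (rule ccontr)
      assume "\<not> ?thesis"
      then obtain x where x: "inner a x \<le> b" "inner a' x \<le> b'" by auto
      have "- (norm a' / norm a) * inner a x \<le> b'" using x(2) ia by simp
      hence "- (inner a x / norm a) \<le> b' / norm a'" using na by (simp add: field_simps)
      moreover have "inner a x / norm a \<le> b / norm a" using x(1) na by (simp add: divide_right_mono)
      ultimately show False using lt by linarith
    qed
    thus ?thesis by (simp add: tangent_None_None)
  qed
  have neg: "halfspace_coords a' b' = - halfspace_coords a b" if e: "b / norm a + b' / norm a' = 0"
  proof -
    have "b' / norm a' = - (b / norm a)" using e by simp
    thus ?thesis unfolding halfspace_coords_def using par2 by simp
  qed
  show ?thesis unfolding packing_relation_def l using tang neg d(2) by force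
qed

lemma packing_relation_of_disjoint:
  assumes "inversive_coords S v" "inversive_coords T w" "ext_interior S \<inter> ext_interior T = {}"
  shows "packing_relation S v T w"
proof -
  have sym: "ext_interior T \<inter> ext_interior S = {}" using assms(3) by blast
  from assms(1) consider
      (B) c r where "r > 0" "S = dball_ball c r" "v = ball_coords c r"
    | (E) c r where "r > 0" "S = dball_exterior c r" "v = - ball_coords c r"
    | (H) a b where "a \<noteq> 0" "S = dball_halfspace a b" "v = halfspace_coords a b"
    unfolding inversive_coords_def by blast
  note cS = this
  from assms(2) consider
      (B) c r where "r > 0" "T = dball_ball c r" "w = ball_coords c r"
    | (E) c r where "r > 0" "T = dball_exterior c r" "w = - ball_coords c r"
    | (H) a b where "a \<noteq> 0" "T = dball_halfspace a b" "w = halfspace_coords a b"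
    unfolding inversive_coords_def by blast
  note cT = this
  show ?thesis
  proof (cases rule: cS)
    case SB: (B c r)
    show ?thesis
    proof (cases rule: cT)
      case (B c' r') then show ?thesis using SB assms packing_relation_cball_cball by simp
    next
      case (E c' r') then show ?thesis using SB assms packing_relation_cball_exterior by simp
    next
      case (H a b) then show ?thesis using SB assms packing_relation_cball_halfspace by simp
    qed
  next
    case SE: (E c r)
    show ?thesis
    proof (cases rule: cT)
      case (B c' r')
      then show ?thesis using SE sym packing_relation_cball_exterior packing_relation_sym by metis
    next
      case (E c' r') then show ?thesis using SE assms exteriors_not_disjoint by metis
    next
      case (H a b) then show ?thesis using SE assms exterior_halfspace_not_disjoint by metis
    qed
  next
    case SH: (H a b)
    show ?thesis
    proof (cases rule: cT)
      case (B c' r')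
      then show ?thesis using SH sym packing_relation_cball_halfspace packing_relation_sym by metis
    next
      case (E c' r') then show ?thesis using SH sym exterior_halfspace_not_disjoint by metis
    next
      case (H a' b') then show ?thesis using SH assms packing_relation_halfspaces by simp
    qed
  qed
qed

lemma ball_packable_inversive_vectors:
  assumes "ball_packable TYPE('n::finite) V E"
  obtains vec :: "'v \<Rightarrow> ((real^'n) \<times> real) \<times> real" where
    "\<And>x. x \<in> V \<Longrightarrow> lorentz (vec x) (vec x) = 1"
    "\<And>x y. x \<in> V \<Longrightarrow> y \<in> V \<Longrightarrow> x \<noteq> y \<Longrightarrow> lorentz (vec x) (vec y) \<le> -1"
    "\<And>x y. x \<in> V \<Longrightarrow> y \<in> V \<Longrightarrow> x \<noteq> y \<Longrightarrow> E x y \<Longrightarrow> lorentz (vec x) (vec y) = -1"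
    "\<And>x y. x \<in> V \<Longrightarrow> y \<in> V \<Longrightarrow> x \<noteq> y \<Longrightarrow> lorentz (vec x) (vec y) = -1 \<Longrightarrow>
      vec y \<noteq> - vec x \<Longrightarrow> E x y"
proof -
  obtain B :: "'v \<Rightarrow> (real^'n) option set" where
    dball: "\<forall>x\<in>V. is_dball (B x)" and
    disjoint: "\<forall>x\<in>V. \<forall>y\<in>V. x \<noteq> y \<longrightarrow> ext_interior (B x) \<inter> ext_interior (B y) = {}" and
    tangency: "\<forall>x\<in>V. \<forall>y\<in>V. x \<noteq> y \<longrightarrow> (E x y \<longleftrightarrow> tangent (B x) (B y))"
    using assms unfolding ball_packable_def by (elim exE conjE) (rule that)
  define vec where "vec x = (SOME v. inversive_coords (B x) v)" for x
  have coords: "inversive_coords (B x) (vec x)" if "x \<in> V" for x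
    unfolding vec_def using inversive_coords_exist dball that by (metis someI_ex)
  have rel: "packing_relation (B x) (vec x) (B y) (vec y)" and tan: "E x y \<longleftrightarrow> tangent (B x) (B y)"
    if "x \<in> V" "y \<in> V" "x \<noteq> y" for x y
    using packing_relation_of_disjoint[OF coords[OF that(1)] coords[OF that(2)]] disjoint tangency that
    by blast+
  show ?thesis
  proof (rule that)
    show "lorentz (vec x) (vec x) = 1" if "x \<in> V" for x
      by (rule inversive_coords_unit[OF coords[OF that]])
    show "lorentz (vec x) (vec y) \<le> -1" if "x \<in> V" "y \<in> V" "x \<noteq> y" for x y
      using rel[OF that] by (simp add: packing_relation_def)
    show "lorentz (vec x) (vec y) = -1" if "x \<in> V" "y \<in> V" "x \<noteq> y" "E x y" for x y
      using rel[OF that(1-3)] tan[OF that(1-3)] that(4) by (simp add: packing_relation_def)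
    show "E x y" if "x \<in> V" "y \<in> V" "x \<noteq> y" "lorentz (vec x) (vec y) = -1" "vec y \<noteq> - vec x"
      for x y
      using rel[OF that(1-3)] tan[OF that(1-3)] that(4,5) by (simp add: packing_relation_def)
  qed
qed

lemma card_eq_4E:
  assumes "card A = 4"
  obtains a b c e where "A = {a, b, c, e}" "distinct [a, b, c, e]"
proof -
  from assms have "card A = Suc (Suc (Suc (Suc 0)))" by simp
  then show ?thesis using that by (auto simp: card_Suc_eq)
qed

text \<open>Inversive vectors of a packing of \<open>\<lozenge>\<^sub>d\<^sub>-\<^sub>1 \<star> G\<^sub>4\<close>: \<open>v i\<close> and
  \<open>v' i\<close> belong to the opposite orthoplex vertices \<open>(i, True)\<close> and \<open>(i, False)\<close>, and
  \<open>w u\<close> to the vertex \<open>u\<close> of \<open>G\<^sub>4\<close>.\<close>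

locale orthoplex_join_vectors =
  fixes v v' :: "nat \<Rightarrow> ((real^'n::finite) \<times> real) \<times> real"
    and w :: "'b \<Rightarrow> ((real^'n) \<times> real) \<times> real" and V4 :: "'b set"
  assumes dim: "CARD('n) \<ge> 3" and card_V4: "card V4 = 4"
    and unit_v: "\<And>i. i < CARD('n) - 1 \<Longrightarrow> lorentz (v i) (v i) = 1 \<and> lorentz (v' i) (v' i) = 1"
    and unit_w: "\<And>u. u \<in> V4 \<Longrightarrow> lorentz (w u) (w u) = 1"
    and tangent_v: "\<And>i j. i < CARD('n) - 1 \<Longrightarrow> j < CARD('n) - 1 \<Longrightarrow> i \<noteq> j \<Longrightarrow>
      lorentz (v i) (v j) = -1 \<and> lorentz (v i) (v' j) = -1 \<and> lorentz (v' i) (v' j) = -1"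
    and opposite_v: "\<And>i. i < CARD('n) - 1 \<Longrightarrow>
      lorentz (v i) (v' i) \<le> -1 \<and> (lorentz (v i) (v' i) = -1 \<longrightarrow> v' i = - v i)"
    and tangent_w: "\<And>u i. u \<in> V4 \<Longrightarrow> i < CARD('n) - 1 \<Longrightarrow>
      lorentz (w u) (v i) = -1 \<and> lorentz (w u) (v' i) = -1"
    and packed_w: "\<And>u u'. u \<in> V4 \<Longrightarrow> u' \<in> V4 \<Longrightarrow> u \<noteq> u' \<Longrightarrow> lorentz (w u) (w u') \<le> -1"
begin

definition pair_diff :: "nat \<Rightarrow> ((real^'n) \<times> real) \<times> real" where
  "pair_diff i = v i - v' i"

definition pair_mid :: "nat \<Rightarrow> ((real^'n) \<times> real) \<times> real" where
  "pair_mid i = (1/2) *\<^sub>R (v i + v' i)"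

lemma tangent_v_all:
  assumes "i < CARD('n) - 1" "j < CARD('n) - 1" "i \<noteq> j"
  shows "lorentz (v i) (v j) = -1" "lorentz (v i) (v' j) = -1"
    "lorentz (v' i) (v j) = -1" "lorentz (v' i) (v' j) = -1"
  using tangent_v[OF assms] tangent_v[OF assms(2,1)] assms(3) by (auto simp: lorentz_sym)

lemma pair_diff_orthogonal:
  "i < CARD('n) - 1 \<Longrightarrow> j < CARD('n) - 1 \<Longrightarrow> i \<noteq> j \<Longrightarrow> lorentz (pair_diff i) (pair_diff j) = 0"
  using tangent_v_all by (simp add: pair_diff_def lorentz_simps)

lemma pair_diff_spacelike: "i < CARD('n) - 1 \<Longrightarrow> lorentz (pair_diff i) (pair_diff i) \<ge> 4"
  using unit_v[of i] opposite_v[of i] by (simp add: pair_diff_def lorentz_simps lorentz_sym)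

lemma pair_diff_orthogonal_w: "i < CARD('n) - 1 \<Longrightarrow> u \<in> V4 \<Longrightarrow> lorentz (w u) (pair_diff i) = 0"
  using tangent_w by (simp add: pair_diff_def lorentz_simps)

lemma pair_diff_orthogonal_mid:
  assumes "i < CARD('n) - 1" "j < CARD('n) - 1"
  shows "lorentz (pair_mid j) (pair_diff i) = 0"
proof (cases "i = j")
  case True
  then show ?thesis using unit_v assms
    by (simp add: pair_diff_def pair_mid_def lorentz_simps lorentz_sym)
next
  case False
  then show ?thesis using tangent_v_all[OF assms False]
    by (simp add: pair_diff_def pair_mid_def lorentz_simps lorentz_sym)
qed

lemma pair_mid_w: "i < CARD('n) - 1 \<Longrightarrow> u \<in> V4 \<Longrightarrow> lorentz (w u) (pair_mid i) = -1"
  using tangent_w by (simp add: pair_mid_def lorentz_simps)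

lemma pair_mid_pair_mid:
  "i < CARD('n) - 1 \<Longrightarrow> j < CARD('n) - 1 \<Longrightarrow> i \<noteq> j \<Longrightarrow> lorentz (pair_mid i) (pair_mid j) = -1"
  using tangent_v_all by (simp add: pair_mid_def lorentz_simps)

text \<open>Opposite vertices of the orthoplex cannot be the two sides of one sphere, since both are
  tangent to the balls of \<open>V4\<close>; so their midpoint is timelike.\<close>

lemma pair_mid_timelike:
  assumes i: "i < CARD('n) - 1"
  shows "lorentz (pair_mid i) (pair_mid i) < 0"
proof -
  obtain u where u: "u \<in> V4" using card_V4 by fastforce
  have "pair_mid i \<noteq> 0" using pair_mid_w[OF i u] by auto
  then have "v' i \<noteq> - v i" by (auto simp: pair_mid_def)
  then have "lorentz (v i) (v' i) < -1" using opposite_v[OF i] by fastforce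
  then show ?thesis using unit_v[OF i] by (simp add: pair_mid_def lorentz_simps lorentz_sym)
qed

definition frame :: "(((real^'n) \<times> real) \<times> real) set" where
  "frame = insert (pair_mid 0) (pair_diff ` {..<CARD('n) - 1})"

lemma mid_in_frame: "pair_mid 0 \<in> frame"
  by (simp add: frame_def)

lemma mid_timelike: "lorentz (pair_mid 0) (pair_mid 0) < 0"
  using pair_mid_timelike dim by simp

lemma frame_orthogonal_frame: "orthogonal_frame frame" and card_frame: "card frame = CARD('n)"
proof -
  define X where "X = pair_diff ` {..<CARD('n) - 1}"
  have inj: "inj_on pair_diff {..<CARD('n) - 1}"
  proof (rule inj_onI, rule ccontr)
    fix i j assume "i \<in> {..<CARD('n) - 1}" "j \<in> {..<CARD('n) - 1}"
      and "pair_diff i = pair_diff j" "i \<noteq> j"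
    then show False using pair_diff_orthogonal[of i j] pair_diff_spacelike[of i] by simp
  qed
  have X: "orthogonal_frame X"
    unfolding orthogonal_frame_def X_def
  proof (intro conjI ballI impI)
    fix x assume "x \<in> pair_diff ` {..<CARD('n) - 1}"
    then show "lorentz x x \<noteq> 0" using pair_diff_spacelike by force
  next
    fix x y assume "x \<in> pair_diff ` {..<CARD('n) - 1}" "y \<in> pair_diff ` {..<CARD('n) - 1}" "x \<noteq> y"
    then show "lorentz x y = 0" using pair_diff_orthogonal by auto
  qed simp
  have "\<forall>u\<in>X. lorentz (pair_mid 0) u = 0"
    using pair_diff_orthogonal_mid dim by (auto simp: X_def)
  then have "orthogonal_frame (insert (pair_mid 0) X)" "pair_mid 0 \<notin> X"
    using orthogonal_frame_insert[OF X] mid_timelike by auto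
  moreover have "card X = CARD('n) - 1" using inj by (simp add: X_def card_image)
  moreover have "frame = insert (pair_mid 0) X" by (simp add: frame_def X_def)
  ultimately show "orthogonal_frame frame" "card frame = CARD('n)"
    using X dim by (simp_all add: orthogonal_frame_def)
qed

definition scale :: real where
  "scale = -1 / lorentz (pair_mid 0) (pair_mid 0)"

definition reduced :: "'b \<Rightarrow> ((real^'n) \<times> real) \<times> real" where
  "reduced u = w u - scale *\<^sub>R pair_mid 0"

lemma scale_mid: "scale * lorentz (pair_mid 0) (pair_mid 0) = -1"
  using mid_timelike by (simp add: scale_def)

lemma reduced_orthogonal_frame: "u \<in> V4 \<Longrightarrow> \<forall>f\<in>frame. lorentz (reduced u) f = 0"
  using pair_diff_orthogonal_w pair_mid_w[of 0] pair_diff_orthogonal_mid[of _ 0] scale_mid dim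
  by (auto simp: frame_def reduced_def lorentz_simps lorentz_sym)

lemma lorentz_reduced:
  "u \<in> V4 \<Longrightarrow> u' \<in> V4 \<Longrightarrow> lorentz (reduced u) (reduced u') = lorentz (w u) (w u') + scale"
  using pair_mid_w[of 0] scale_mid dim
  by (simp add: reduced_def lorentz_simps lorentz_sym algebra_simps)

lemma w_not_antipodal: "u \<in> V4 \<Longrightarrow> u' \<in> V4 \<Longrightarrow> w u' \<noteq> - w u"
  using tangent_w[of u 0] tangent_w[of u' 0] dim by (auto simp: lorentz_simps)

definition mid_defect :: "((real^'n) \<times> real) \<times> real" where
  "mid_defect = pair_mid 1 - scale *\<^sub>R pair_mid 0"

lemma mid_defect_orthogonal_frame: "\<forall>f\<in>frame. lorentz mid_defect f = 0"
  using pair_mid_pair_mid[of 1 0] pair_diff_orthogonal_mid[of _ 1] pair_diff_orthogonal_mid[of _ 0]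
    scale_mid dim
  by (auto simp: frame_def mid_defect_def lorentz_simps lorentz_sym)

lemma lorentz_reduced_mid_defect: "u \<in> V4 \<Longrightarrow> lorentz (reduced u) mid_defect = scale - 1"
  using pair_mid_w[of 0 u] pair_mid_w[of 1 u] pair_mid_pair_mid[of 0 1] scale_mid dim
  by (simp add: reduced_def mid_defect_def lorentz_simps lorentz_sym algebra_simps)

lemma lorentz_reduced_shift:
  assumes "u \<in> V4" "u' \<in> V4"
  shows "lorentz (reduced u - t *\<^sub>R mid_defect) (reduced u' - t *\<^sub>R mid_defect) =
    lorentz (w u) (w u') + scale - 2 * t * (scale - 1) + t^2 * lorentz mid_defect mid_defect"
proof -
  have "lorentz (reduced u - t *\<^sub>R mid_defect) (reduced u' - t *\<^sub>R mid_defect) =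
      lorentz (reduced u) (reduced u') - t * lorentz (reduced u) mid_defect
      - t * lorentz mid_defect (reduced u') + t^2 * lorentz mid_defect mid_defect"
    by (simp add: lorentz_simps power2_eq_square algebra_simps)
  also have "lorentz mid_defect (reduced u') = scale - 1"
    using lorentz_reduced_mid_defect[OF assms(2)] by (simp add: lorentz_sym)
  also have "lorentz (reduced u) mid_defect = scale - 1" by (rule lorentz_reduced_mid_defect[OF assms(1)])
  also have "lorentz (reduced u) (reduced u') = lorentz (w u) (w u') + scale"
    by (rule lorentz_reduced[OF assms])
  finally show ?thesis by simp
qed

text \<open>If \<open>mid_defect \<noteq> 0\<close>, projecting the reduced vectors orthogonally to it would give
  four vectors on a spacelike line, of equal norm \<open>N\<close> but with pairwise products \<open>\<noteq> N\<close>.\<close>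

lemma mid_defect_eq_0: "mid_defect = 0"
proof (rule ccontr)
  assume "mid_defect \<noteq> 0"
  define Q where "Q = lorentz mid_defect mid_defect"
  have "lorentz (pair_mid 0) mid_defect = 0"
    using mid_defect_orthogonal_frame mid_in_frame lorentz_sym by metis
  then have "Q \<ge> 0" "Q \<noteq> 0"
    using timelike_orthogonal_nonneg[OF mid_timelike] timelike_orthogonal_null_imp_zero[OF mid_timelike]
      \<open>mid_defect \<noteq> 0\<close> unfolding Q_def by blast+
  then have Q: "Q > 0" by simp
  let ?F = "insert mid_defect frame"
  have F: "orthogonal_frame ?F" "mid_defect \<notin> frame"
    using orthogonal_frame_insert[OF frame_orthogonal_frame _ mid_defect_orthogonal_frame] Q
    by (simp_all add: Q_def)
  have card_F: "card ?F \<ge> CARD('n) + 1"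
    using F(2) frame_orthogonal_frame card_frame by (simp add: orthogonal_frame_def)
  define z where "z u = reduced u - ((scale - 1) / Q) *\<^sub>R mid_defect" for u
  have z_F: "\<forall>f\<in>?F. lorentz (z u) f = 0" if "u \<in> V4" for u
    using lorentz_reduced_mid_defect[OF that] reduced_orthogonal_frame[OF that]
      mid_defect_orthogonal_frame Q
    by (simp add: z_def lorentz_simps Q_def[symmetric])
  define N where "N = 1 + scale - (scale - 1)^2 / Q"
  have zz: "lorentz (z u) (z u') = lorentz (w u) (w u') - 1 + N" if "u \<in> V4" "u' \<in> V4" for u u'
    unfolding z_def lorentz_reduced_shift[OF that] Q_def[symmetric]
    using Q by (simp add: N_def power2_eq_square field_simps)
  have z_norm: "lorentz (z u) (z u) = N" if "u \<in> V4" for u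
    using zz[OF that that] unit_w[OF that] by simp
  have z_ne: "lorentz (z u) (z u') \<noteq> N" if "u \<in> V4" "u' \<in> V4" "u \<noteq> u'" for u u'
    using zz[OF that(1,2)] packed_w[OF that] by simp
  obtain a b c e where "V4 = {a, b, c, e}" "distinct [a, b, c, e]"
    using card_eq_4E[OF card_V4] by blast
  then have abc: "a \<in> V4" "b \<in> V4" "c \<in> V4" "a \<noteq> b" "a \<noteq> c" "b \<noteq> c" by auto
  show False
    using complement_no_opposite_triple[OF F(1) card_F _ mid_timelike z_F[OF abc(1)] z_F[OF abc(2)]
        z_F[OF abc(3)] z_norm[OF abc(1)] z_norm[OF abc(2)] z_norm[OF abc(3)]
        z_ne[OF abc(1,2,4)] z_ne[OF abc(1,3,5)] z_ne[OF abc(2,3,6)]] mid_in_frame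
    by simp
qed

lemma scale_eq_1: "scale = 1"
proof -
  obtain u where "u \<in> V4" using card_V4 by fastforce
  with lorentz_reduced_mid_defect[OF this] show ?thesis by (simp add: mid_defect_eq_0)
qed

lemma square_pattern:
  "\<exists>a b c e. V4 = {a, b, c, e} \<and> distinct [a, b, c, e] \<and>
    lorentz (w a) (w c) = -3 \<and> lorentz (w b) (w e) = -3 \<and>
    lorentz (w a) (w b) = -1 \<and> lorentz (w a) (w e) = -1 \<and>
    lorentz (w c) (w b) = -1 \<and> lorentz (w c) (w e) = -1"
proof -
  obtain a0 b0 c0 e0 where V4: "V4 = {a0, b0, c0, e0}" "distinct [a0, b0, c0, e0]"
    using card_eq_4E[OF card_V4] by blast
  have reduced_w: "lorentz (reduced u) (reduced u') = lorentz (w u) (w u') + 1"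
    if "u \<in> V4" "u' \<in> V4" for u u'
    using lorentz_reduced[OF that] scale_eq_1 by simp
  have "\<exists>a b c e. V4 = {a, b, c, e} \<and> distinct [a, b, c, e] \<and>
    lorentz (reduced a) (reduced c) = -2 \<and> lorentz (reduced b) (reduced e) = -2 \<and>
    lorentz (reduced a) (reduced b) = 0 \<and> lorentz (reduced a) (reduced e) = 0 \<and>
    lorentz (reduced c) (reduced b) = 0 \<and> lorentz (reduced c) (reduced e) = 0"
  proof (rule complement_obtuse_quadruple_square[OF frame_orthogonal_frame _ mid_in_frame mid_timelike V4])
    show "card frame \<ge> CARD('n)" by (simp add: card_frame)
    show "\<forall>f\<in>frame. lorentz (reduced u) f = 0" if "u \<in> V4" for u
      by (rule reduced_orthogonal_frame[OF that])
    show "lorentz (reduced u) (reduced u) = 2" if "u \<in> V4" for u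
      using reduced_w[OF that that] unit_w[OF that] by simp
    show "lorentz (reduced u) (reduced u') \<le> 0" if "u \<in> V4" "u' \<in> V4" "u \<noteq> u'" for u u'
      using reduced_w[OF that(1,2)] packed_w[OF that] by simp
  qed
  then obtain a b c e where square: "V4 = {a, b, c, e}" "distinct [a, b, c, e]"
    "lorentz (reduced a) (reduced c) = -2" "lorentz (reduced b) (reduced e) = -2"
    "lorentz (reduced a) (reduced b) = 0" "lorentz (reduced a) (reduced e) = 0"
    "lorentz (reduced c) (reduced b) = 0" "lorentz (reduced c) (reduced e) = 0"
    by blast
  moreover have "a \<in> V4" "b \<in> V4" "c \<in> V4" "e \<in> V4" using square(1) by auto
  ultimately show ?thesis
    by (intro exI[of _ a] exI[of _ b] exI[of _ c] exI[of _ e]) (simp add: reduced_w)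
qed

end

lemma graph_iso_C4I:
  assumes V: "V = {a, b, c, e}" "distinct [a, b, c, e]"
    and E_in: "\<forall>u v. E u v \<longrightarrow> u \<in> V \<and> v \<in> V \<and> u \<noteq> v"
    and E_sym: "\<forall>u v. E u v \<longrightarrow> E v u"
    and "E a b" "E a e" "E c b" "E c e" "\<not> E a c" "\<not> E b e"
  shows "graph_iso V E C4_V C4_E"
proof -
  define f where "f x = (if x = a then 0 else if x = b then 1 else if x = c then 2 else (3::nat))"
    for x
  have "bij_betw f V C4_V"
    by (rule bij_betw_imageI) (use V in \<open>auto simp: inj_on_def f_def C4_V_def\<close>)
  moreover have "E x y \<longleftrightarrow> C4_E (f x) (f y)" if "x \<in> V" "y \<in> V" for x y
    using that assms by (auto simp: f_def C4_E_def)
  ultimately show ?thesis unfolding graph_iso_def by blast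
qed

lemma ball_packable_orthoplex_join_imp_C4:
  fixes V4 :: "'b set" and E4 :: "'b \<Rightarrow> 'b \<Rightarrow> bool"
  assumes dim: "CARD('n::finite) \<ge> 3" and card_V4: "card V4 = 4"
    and E4_in: "\<forall>u v. E4 u v \<longrightarrow> u \<in> V4 \<and> v \<in> V4 \<and> u \<noteq> v"
    and E4_sym: "\<forall>u v. E4 u v \<longrightarrow> E4 v u"
    and packable: "ball_packable TYPE('n) (join_V (orth_V (CARD('n) - 1)) V4) (join_E orth_E E4)"
  shows "graph_iso V4 E4 C4_V C4_E"
proof -
  let ?V = "join_V (orth_V (CARD('n) - 1)) V4"
  obtain vec :: "(nat \<times> bool) + 'b \<Rightarrow> ((real^'n) \<times> real) \<times> real" where
    unit: "\<And>x. x \<in> ?V \<Longrightarrow> lorentz (vec x) (vec x) = 1" and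
    packed: "\<And>x y. x \<in> ?V \<Longrightarrow> y \<in> ?V \<Longrightarrow> x \<noteq> y \<Longrightarrow> lorentz (vec x) (vec y) \<le> -1" and
    adjacent: "\<And>x y. x \<in> ?V \<Longrightarrow> y \<in> ?V \<Longrightarrow> x \<noteq> y \<Longrightarrow> join_E orth_E E4 x y \<Longrightarrow>
      lorentz (vec x) (vec y) = -1" and
    nonadjacent: "\<And>x y. x \<in> ?V \<Longrightarrow> y \<in> ?V \<Longrightarrow> x \<noteq> y \<Longrightarrow> lorentz (vec x) (vec y) = -1 \<Longrightarrow>
      vec y \<noteq> - vec x \<Longrightarrow> join_E orth_E E4 x y"
    using ball_packable_inversive_vectors[OF packable] by blast
  interpret orthoplex_join_vectors "\<lambda>i. vec (Inl (i, True))" "\<lambda>i. vec (Inl (i, False))"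
    "\<lambda>u. vec (Inr u)" V4
  proof unfold_locales
    fix i assume i: "i < CARD('n) - 1"
    have "\<not> join_E orth_E E4 (Inl (i, True)) (Inl (i, False))" by (simp add: orth_E_def)
    moreover have x: "Inl (i, True) \<in> ?V" "Inl (i, False) \<in> ?V" "Inl (i, True) \<noteq> Inl (i, False)"
      using i by (simp_all add: join_V_def orth_V_def)
    ultimately show "lorentz (vec (Inl (i, True))) (vec (Inl (i, False))) \<le> -1 \<and>
        (lorentz (vec (Inl (i, True))) (vec (Inl (i, False))) = -1 \<longrightarrow>
         vec (Inl (i, False)) = - vec (Inl (i, True)))"
      using packed[OF x] nonadjacent[OF x] by auto
  qed (auto intro!: unit packed adjacent simp: join_V_def orth_V_def orth_E_def dim card_V4)
  have E4_iff: "E4 u u' \<longleftrightarrow> lorentz (vec (Inr u)) (vec (Inr u')) = -1"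
    if "u \<in> V4" "u' \<in> V4" "u \<noteq> u'" for u u'
    using adjacent[of "Inr u" "Inr u'"] nonadjacent[of "Inr u" "Inr u'"] w_not_antipodal[of u u'] that
    by (auto simp: join_V_def)
  obtain a b c e where square: "V4 = {a, b, c, e}" "distinct [a, b, c, e]"
    "lorentz (vec (Inr a)) (vec (Inr c)) = -3" "lorentz (vec (Inr b)) (vec (Inr e)) = -3"
    "lorentz (vec (Inr a)) (vec (Inr b)) = -1" "lorentz (vec (Inr a)) (vec (Inr e)) = -1"
    "lorentz (vec (Inr c)) (vec (Inr b)) = -1" "lorentz (vec (Inr c)) (vec (Inr e)) = -1"
    using square_pattern by blast
  have "a \<in> V4" "b \<in> V4" "c \<in> V4" "e \<in> V4" using square(1) by auto
  with square show ?thesis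
    by (intro graph_iso_C4I[OF square(1,2) E4_in E4_sym]) (auto simp: E4_iff)
qed

lemma ball_packable_graph_iso:
  assumes iso: "graph_iso V E W F" and packable: "ball_packable TYPE('n::finite) W F"
  shows "ball_packable TYPE('n) V E"
proof -
  obtain f where f: "bij_betw f V W" and edges: "\<forall>u\<in>V. \<forall>v\<in>V. E u v \<longleftrightarrow> F (f u) (f v)"
    using iso unfolding graph_iso_def by blast
  obtain B :: "_ \<Rightarrow> (real^'n) option set" where B:
    "inj_on B W" "\<forall>x\<in>W. is_dball (B x)"
    "\<forall>x\<in>W. \<forall>y\<in>W. x \<noteq> y \<longrightarrow> ext_interior (B x) \<inter> ext_interior (B y) = {}"
    "\<forall>x\<in>W. \<forall>y\<in>W. x \<noteq> y \<longrightarrow> (F x y \<longleftrightarrow> tangent (B x) (B y))"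
    using packable unfolding ball_packable_def by (elim exE conjE) (rule that)
  have fW: "f x \<in> W" if "x \<in> V" for x using f that by (auto simp: bij_betw_def)
  have f_ne: "f x \<noteq> f y" if "x \<in> V" "y \<in> V" "x \<noteq> y" for x y
    using f that by (auto simp: bij_betw_def inj_on_def)
  have "inj_on (B \<circ> f) V"
    using f B(1) by (auto simp: bij_betw_def intro: comp_inj_on)
  moreover have "\<forall>x\<in>V. is_dball ((B \<circ> f) x)" using B(2) fW by simp
  moreover have "\<forall>x\<in>V. \<forall>y\<in>V. x \<noteq> y \<longrightarrow> ext_interior ((B \<circ> f) x) \<inter> ext_interior ((B \<circ> f) y) = {}"
    using B(3) fW f_ne by simp
  moreover have "\<forall>x\<in>V. \<forall>y\<in>V. x \<noteq> y \<longrightarrow> (E x y \<longleftrightarrow> tangent ((B \<circ> f) x) ((B \<circ> f) y))"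
    using B(4) fW f_ne edges by simp
  ultimately show ?thesis unfolding ball_packable_def by blast
qed

lemma C4_E_iff_parity: "i < 4 \<Longrightarrow> j < 4 \<Longrightarrow> C4_E i j \<longleftrightarrow> i mod 2 \<noteq> j mod 2"
proof -
  assume "i < 4" "j < 4"
  then have "i \<in> {0, 1, 2, 3}" "j \<in> {0, 1, 2, 3}" by auto
  then show ?thesis by (auto simp: C4_E_def)
qed

lemma parity_code_inj: "inj_on (\<lambda>n. (n mod 2, n < 2)) C4_V"
proof (rule inj_onI)
  fix m n assume "m \<in> C4_V" "n \<in> C4_V" "(m mod 2, m < 2) = (n mod 2, n < 2)"
  moreover have "m \<in> {0, 1, 2, 3}" "n \<in> {0, 1, 2, 3}" using \<open>m \<in> C4_V\<close> \<open>n \<in> C4_V\<close>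
    by (auto simp: C4_V_def)
  ultimately show "m = n" by auto
qed

text \<open>Since \<open>C4\<close> is the orthoplex on two coordinates, gluing it to \<open>\<lozenge>\<^sub>k\<close> gives
  \<open>\<lozenge>\<^sub>k\<^sub>+\<^sub>2\<close>: the cycle vertex \<open>j\<close> becomes \<open>(j mod 2, j < 2)\<close>.\<close>

lemma graph_iso_orthoplex_join_C4:
  assumes "graph_iso V4 E4 C4_V C4_E"
  shows "graph_iso (join_V (orth_V k) V4) (join_E orth_E E4) (orth_V (k + 2)) orth_E"
proof -
  obtain f where f: "bij_betw f V4 C4_V" and edges: "\<forall>u\<in>V4. \<forall>v\<in>V4. E4 u v \<longleftrightarrow> C4_E (f u) (f v)"
    using assms unfolding graph_iso_def by blast
  have f_lt: "f u < 4" if "u \<in> V4" for u using f that by (auto simp: bij_betw_def C4_V_def)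
  define g where "g x = (case x of Inl p \<Rightarrow> (fst p + 2, snd p) | Inr u \<Rightarrow> (f u mod 2, f u < 2))"
    for x :: "(nat \<times> bool) + 'a"
  have code: "inj_on (\<lambda>u. (f u mod 2, f u < 2)) V4"
    using comp_inj_on[of f V4 "\<lambda>n. (n mod 2, n < 2)"] parity_code_inj f
    by (simp add: bij_betw_def o_def)
  have inj: "inj_on g (join_V (orth_V k) V4)"
  proof (rule inj_onI)
    fix x y assume x: "x \<in> join_V (orth_V k) V4" and y: "y \<in> join_V (orth_V k) V4" and "g x = g y"
    then show "x = y"
    proof (cases x; cases y)
      fix u u' assume "x = Inr u" "y = Inr u'"
      then show ?thesis using x y \<open>g x = g y\<close> code by (auto simp: g_def join_V_def inj_on_def)
    qed (auto simp: g_def prod_eq_iff)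
  qed
  have onto: "orth_V (k + 2) \<subseteq> g ` join_V (orth_V k) V4"
  proof
    fix p assume "p \<in> orth_V (k + 2)"
    then obtain j s where p: "p = (j, s)" "j < k + 2" by (auto simp: orth_V_def)
    show "p \<in> g ` join_V (orth_V k) V4"
    proof (cases "j < 2")
      case True
      define n where "n = (if s then j else j + 2)"
      have "n \<in> f ` V4" using f True by (auto simp: bij_betw_def C4_V_def n_def)
      then obtain u where "u \<in> V4" "f u = n" by blast
      then show ?thesis using True p
        by (intro image_eqI[of _ _ "Inr u"]) (auto simp: g_def n_def join_V_def)
    next
      case False
      then show ?thesis using p
        by (intro image_eqI[of _ _ "Inl (j - 2, s)"]) (auto simp: g_def join_V_def orth_V_def)
    qed
  qed
  have "g ` join_V (orth_V k) V4 \<subseteq> orth_V (k + 2)"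
    using f_lt by (auto simp: g_def join_V_def orth_V_def)
  with inj onto have "bij_betw g (join_V (orth_V k) V4) (orth_V (k + 2))"
    by (simp add: bij_betw_def subset_antisym)
  moreover have "join_E orth_E E4 x y \<longleftrightarrow> orth_E (g x) (g y)"
    if "x \<in> join_V (orth_V k) V4" "y \<in> join_V (orth_V k) V4" for x y
    using that edges C4_E_iff_parity f_lt by (auto simp: g_def join_V_def orth_E_def)
  ultimately show ?thesis unfolding graph_iso_def by blast
qed

lemma cballs_disjoint_interiors:
  "r + r' \<le> dist c c' \<Longrightarrow> ext_interior (dball_ball c r) \<inter> ext_interior (dball_ball c' r') = {}"
  using ext_interior_cball_subset[of c r] ext_interior_cball_subset[of c' r'] disjoint_ballI[of r r' c c']
  by blast

lemma cball_exterior_disjoint_interiors: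
  assumes "R > 0" "dist c c' + r \<le> R"
  shows "ext_interior (dball_ball c r) \<inter> ext_interior (dball_exterior c' R) = {}"
proof -
  have "ball c r \<subseteq> cball c' R"
  proof
    fix x assume "x \<in> ball c r"
    then show "x \<in> cball c' R" using assms(2) dist_triangle[of c' x c] by (simp add: dist_commute)
  qed
  then show ?thesis
    using ext_interior_cball_subset[of c r] ext_interior_exterior_subset[OF assms(1), of c']
      by blast
qed

lemma dist_signed_axes:
  fixes i j :: "'n::finite"
  shows "dist ((if s then 1 else -1) *\<^sub>R axis i (1::real)) ((if t then 1 else -1) *\<^sub>R axis j 1) =
     (if i = j then (if s = t then 0 else 2) else sqrt 2)"
proof (cases "i = j")
  case True
  moreover have "norm (axis j (1::real) + axis j 1 :: real^'n) = 2" for j :: 'n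
    by (simp flip: scaleR_2)
  ultimately show ?thesis by (cases s; cases t) (simp_all add: dist_norm norm_minus_commute)
next
  case False
  define \<sigma> :: real where "\<sigma> = (if s then 1 else -1)"
  define \<tau> :: real where "\<tau> = (if t then 1 else -1)"
  have "\<sigma> * \<sigma> = 1" "\<tau> * \<tau> = 1" by (simp_all add: \<sigma>_def \<tau>_def)
  then have "(dist (\<sigma> *\<^sub>R axis i (1::real)) (\<tau> *\<^sub>R axis j 1))^2 = 2"
    using False by (simp add: dist_norm power2_norm_eq_inner inner_diff_left inner_diff_right
        inner_axis_axis algebra_simps)
  with False show ?thesis by (simp add: real_sqrt_unique[symmetric] \<sigma>_def \<tau>_def)
qed

definition cross_radius :: real where
  "cross_radius = sqrt 2 / 2"

lemma cross_radius: "0 < cross_radius" "cross_radius < 1" "cross_radius + cross_radius = sqrt 2"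
  using real_sqrt_less_iff[of 2 4] by (simp_all add: cross_radius_def)

locale cross_polytope_packing =
  fixes h :: "nat \<Rightarrow> 'n::finite"
  assumes h: "bij_betw h {0..<CARD('n)} UNIV"
begin

definition centre :: "nat \<times> bool \<Rightarrow> real^'n" where
  "centre p = (if snd p then 1 else -1) *\<^sub>R axis (h (fst p)) 1"

definition cross_ball :: "nat \<times> bool \<Rightarrow> (real^'n) option set" where
  "cross_ball p = (if fst p < CARD('n) then dball_ball (centre p) cross_radius
    else if snd p then dball_ball 0 (1 - cross_radius) else dball_exterior 0 (1 + cross_radius))"

definition packed :: "nat \<times> bool \<Rightarrow> nat \<times> bool \<Rightarrow> bool" where
  "packed p q \<longleftrightarrow> ext_interior (cross_ball p) \<inter> ext_interior (cross_ball q) = {} \<and>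
    (orth_E p q \<longleftrightarrow> tangent (cross_ball p) (cross_ball q))"

lemma norm_centre: "norm (centre p) = 1"
  by (cases "snd p") (simp_all add: centre_def)

lemma packed_sym: "packed p q \<Longrightarrow> packed q p"
  by (auto simp: packed_def orth_E_def tangent_sym)

lemma packed_axis_axis:
  assumes "fst p < CARD('n)" "fst q < CARD('n)" "p \<noteq> q"
  shows "packed p q"
proof -
  have "h (fst p) = h (fst q) \<longleftrightarrow> fst p = fst q"
    using h assms(1,2) by (auto simp: bij_betw_def inj_on_def)
  moreover have "fst p = fst q \<Longrightarrow> snd p \<noteq> snd q" using assms(3) by (auto simp: prod_eq_iff)
  ultimately have dist: "dist (centre p) (centre q) =
      (if fst p = fst q then 2 else cross_radius + cross_radius)"
    unfolding centre_def dist_signed_axes cross_radius(3) by simp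
  then have "cross_radius + cross_radius \<le> dist (centre p) (centre q)" using cross_radius by auto
  with tangent_cball_cball_iff[OF cross_radius(1) cross_radius(1) this]
    cballs_disjoint_interiors[OF this] dist cross_radius
  show ?thesis using assms(1,2) by (auto simp: packed_def cross_ball_def orth_E_def)
qed

lemma packed_axis_inner:
  assumes "fst p < CARD('n)"
  shows "packed p (CARD('n), True)"
proof -
  have dist: "cross_radius + (1 - cross_radius) = dist (centre p) 0" using norm_centre by simp
  have "1 - cross_radius > 0" using cross_radius by simp
  from tangent_cball_cball_iff[OF cross_radius(1) this eq_refl[OF dist]]
    cballs_disjoint_interiors[OF eq_refl[OF dist]]
  show ?thesis using assms dist by (simp add: packed_def cross_ball_def orth_E_def)
qed

lemma packed_axis_outer:
  assumes "fst p < CARD('n)"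
  shows "packed p (CARD('n), False)"
proof -
  have dist: "dist (centre p) 0 + cross_radius = 1 + cross_radius" and "centre p \<noteq> 0"
    using norm_centre[of p] by auto
  have "1 + cross_radius > 0" using cross_radius by simp
  from tangent_cball_exterior_iff[OF cross_radius(1) this eq_refl[OF dist]]
    cball_exterior_disjoint_interiors[OF this eq_refl[OF dist]] dist \<open>centre p \<noteq> 0\<close>
  show ?thesis using assms by (simp add: packed_def cross_ball_def orth_E_def)
qed

lemma packed_inner_outer: "packed (CARD('n), True) (CARD('n), False)"
proof -
  have "1 - cross_radius > 0" "1 + cross_radius > 0"
    "dist (0::real^'n) 0 + (1 - cross_radius) \<le> 1 + cross_radius"
    using cross_radius by auto
  from tangent_cball_exterior_iff[OF this] cball_exterior_disjoint_interiors[OF this(2,3)]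
  show ?thesis by (simp add: packed_def cross_ball_def orth_E_def)
qed

lemma packed_orthoplex:
  assumes "p \<in> orth_V (CARD('n) + 1)" "q \<in> orth_V (CARD('n) + 1)" "p \<noteq> q"
  shows "packed p q"
proof -
  have vertex: "fst x < CARD('n) \<or> x = (CARD('n), True) \<or> x = (CARD('n), False)"
    if "x \<in> orth_V (CARD('n) + 1)" for x
    using that by (cases x) (auto simp: orth_V_def less_Suc_eq)
  from vertex[OF assms(1)] vertex[OF assms(2)] assms(3) show ?thesis
    by (elim disjE) (auto intro: packed_axis_axis packed_axis_inner packed_axis_outer
        packed_inner_outer packed_sym[OF packed_axis_inner] packed_sym[OF packed_axis_outer]
        packed_sym[OF packed_inner_outer])
qed

lemma cross_ball_interior_nonempty: "ext_interior (cross_ball p) \<noteq> {}"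
proof -
  have "Some ` ball c r \<noteq> {}" if "r > 0" for c :: "real^'n" and r :: real
    using that by auto
  then show ?thesis
    using ball_subset_ext_interior[of "centre p" cross_radius]
      ball_subset_ext_interior[of 0 "1 - cross_radius"]
      exterior_subset_ext_interior[of 0 "1 + cross_radius"] cross_radius
    unfolding cross_ball_def by (smt (verit) empty_iff insertI1 subset_empty)
qed

lemma cross_ball_is_dball: "is_dball (cross_ball p)"
proof -
  have "is_dball (dball_ball c r)" "is_dball (dball_exterior c r)" if "r > 0" for c :: "real^'n" and r
    using that unfolding is_dball_def by blast+
  then show ?thesis using cross_radius by (simp add: cross_ball_def)
qed

lemma orthoplex_ball_packable: "ball_packable TYPE('n) (orth_V (CARD('n) + 1)) orth_E"
proof -
  have "inj_on cross_ball (orth_V (CARD('n) + 1))"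
  proof (rule inj_onI, rule ccontr)
    fix p q assume "p \<in> orth_V (CARD('n) + 1)" "q \<in> orth_V (CARD('n) + 1)"
      and "cross_ball p = cross_ball q" "p \<noteq> q"
    then have "ext_interior (cross_ball p) \<inter> ext_interior (cross_ball p) = {}"
      using packed_orthoplex[of p q] unfolding packed_def by simp
    then show False using cross_ball_interior_nonempty[of p] by simp
  qed
  moreover have "\<forall>p\<in>orth_V (CARD('n) + 1). is_dball (cross_ball p)"
    by (simp add: cross_ball_is_dball)
  moreover have "\<forall>p\<in>orth_V (CARD('n) + 1). \<forall>q\<in>orth_V (CARD('n) + 1). p \<noteq> q \<longrightarrow>
      ext_interior (cross_ball p) \<inter> ext_interior (cross_ball q) = {}"
    "\<forall>p\<in>orth_V (CARD('n) + 1). \<forall>q\<in>orth_V (CARD('n) + 1). p \<noteq> q \<longrightarrow>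
      (orth_E p q \<longleftrightarrow> tangent (cross_ball p) (cross_ball q))"
    using packed_orthoplex unfolding packed_def by blast+
  ultimately show ?thesis unfolding ball_packable_def by (intro exI[of _ cross_ball] conjI)
qed

end

lemma orthoplex_ball_packable: "ball_packable TYPE('n::finite) (orth_V (CARD('n) + 1)) orth_E"
proof -
  obtain h :: "nat \<Rightarrow> 'n" where "bij_betw h {0..<CARD('n)} UNIV"
    using ex_bij_betw_nat_finite[of "UNIV :: 'n set"] by auto
  then interpret cross_polytope_packing h by unfold_locales
  show ?thesis by (rule orthoplex_ball_packable)
qed

theorem corollary3p8:
  fixes V4 :: "'b set" and E4 :: "'b \<Rightarrow> 'b \<Rightarrow> bool"
  assumes "CARD('n::finite) \<ge> 3"
    and "card V4 = 4"
    and "\<forall>u v. E4 u v \<longrightarrow> u \<in> V4 \<and> v \<in> V4 \<and> u \<noteq> v"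
    and "\<forall>u v. E4 u v \<longrightarrow> E4 v u"
  shows "ball_packable TYPE('n) (join_V (orth_V (CARD('n) - 1)) V4) (join_E orth_E E4)
           \<longleftrightarrow> graph_iso V4 E4 C4_V C4_E"
proof
  assume "ball_packable TYPE('n) (join_V (orth_V (CARD('n) - 1)) V4) (join_E orth_E E4)"
  then show "graph_iso V4 E4 C4_V C4_E" by (rule ball_packable_orthoplex_join_imp_C4[OF assms])
next
  assume "graph_iso V4 E4 C4_V C4_E"
  then have "graph_iso (join_V (orth_V (CARD('n) - 1)) V4) (join_E orth_E E4)
      (orth_V (CARD('n) + 1)) orth_E"
    using graph_iso_orthoplex_join_C4[of V4 E4 "CARD('n) - 1"] assms(1) by simp
  then show "ball_packable TYPE('n) (join_V (orth_V (CARD('n) - 1)) V4) (join_E orth_E E4)"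
    using orthoplex_ball_packable by (rule ball_packable_graph_iso)
qed

end
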